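(* Let $\mathcal X,\mathcal Y,\mathcal R$ be sets of binary strings, $r\in\mathbb N$, $F$ a random variable taking values in functions $\mathcal X\to\mathcal Y$, $\mathcal Z\subseteq\mathcal Y^r$, $Z$ a distribution on $\mathcal Z$, $g:\mathcal Z\to\mathcal R$ injective, and $\underline v\in\mathcal X^r$ with pairwise distinct entries. Let $U_B,U_C$ be unitaries, $|\psi\rangle$ a state on $B\otimes C$, $q_B,q_C\in\mathbb N$, and let $\{\Pi_B^w\}_{w\in\mathcal R}$ and $\{\Pi_C^w\}_{w\in\mathcal R}$ be families of pairwise orthogonal projectors on $B$ and $C$ respectively, with $\Pi^w=\Pi_B^w\otimes\Pi_C^w$. Then there is a polynomial $p$ (independent of all other data) such that $$\mathbb E_F\,\mathbb E_{\underline z\leftarrow Z}\Big\|\Pi^{g(\underline z)}\Big((U_BO_B^{F_{\underline v,\underline z}})^{q_B}\otimes(U_CO_C^{F_{\underline v,\underline z}})^{q_C}\Big)|\psi\rangle\Big\|^2\le 9p_{\max}+p(q_B,q_C)\sqrt M,$$ where $p_{\max}=\max_{w\in\mathcal R}\Pr_{\underline z\leftarrow Z}[g(\underline z)=w]$ and $$M=\mathbb E_k\,\mathbb E_l\,\mathbb E_F\,\mathbb E_{\underline z\leftarrow Z}\Big\|(P_{\underline v}\otimes P_{\underline v})\Big((U_BO_B^{F_{\underline v,\underline z}})^{k}\otimes(U_CO_C^{F_{\underline v,\underline z}})^{l}\Big)|\psi\rangle\Big\|^2,$$ with $k$ uniform in $\{0,\dots,q_B-1\}$, $l$ uniform in 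$\{0,\dots,q_C-1\}$.
   Context: For $\underline v\in\mathcal X^r$ with distinct entries and $\underline z\in\mathcal Y^r$, $F_{\underline v,\underline z}$ is the function equal to $F$ except that $F_{\underline v,\underline z}(\underline v_i)=\underline z_i$ for each $i$. For a function $F'$, $O_B^{F'}$ is the oracle unitary $|x\rangle|y\rangle\mapsto|x\rangle|y\oplus F'(x)\rangle$ acting on a query input register (over $\mathcal X$) and output register (over $\mathcal Y$) contained in system $B$ (identity elsewhere); $O_C^{F'}$ likewise on $C$. $P_{\underline v}=\sum_{i=1}^r|\underline v_i\rangle\langle\underline v_i|$ acts on the query input register of the respective system (identity on the rest). *)

theory Defs
  imports "HOL-Probability.Probability" "HOL-Computational_Algebra.Polynomial"
begin

type_synonym bs = "bool list"

(* Basis index of a system containing a query input register (over X),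
   an output register (over Y = {0,1}^m) and a remaining workspace (index set W) *)
type_synonym bidx = "bs \<times> bs \<times> nat"

(* Finite-dimensional vectors / operators, with explicit finite carrier (basis) sets *)
type_synonym 'i vect = "'i \<Rightarrow> complex"
type_synonym 'i oper = "'i \<Rightarrow> 'i \<Rightarrow> complex"

definition strings_of_len :: "nat \<Rightarrow> bs set" where
  "strings_of_len m = {y. length y = m}"

definition bxor :: "bs \<Rightarrow> bs \<Rightarrow> bs" where
  "bxor a b = map2 (\<lambda>p q. p \<noteq> q) a b"

definition reg_space :: "bs set \<Rightarrow> nat \<Rightarrow> nat set \<Rightarrow> bidx set" where
  "reg_space X m W = X \<times> strings_of_len m \<times> W"

definition op_mult :: "'i set \<Rightarrow> 'i oper \<Rightarrow> 'i oper \<Rightarrow> 'i oper" where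
  "op_mult S A B = (\<lambda>i j. \<Sum>k\<in>S. A i k * B k j)"

definition op_apply :: "'i set \<Rightarrow> 'i oper \<Rightarrow> 'i vect \<Rightarrow> 'i vect" where
  "op_apply S A v = (\<lambda>i. \<Sum>k\<in>S. A i k * v k)"

definition vnorm :: "'i set \<Rightarrow> 'i vect \<Rightarrow> real" where
  "vnorm S v = sqrt (\<Sum>i\<in>S. (cmod (v i))\<^sup>2)"

definition op_id :: "'i set \<Rightarrow> 'i oper" where
  "op_id S = (\<lambda>i j. if i = j \<and> i \<in> S then 1 else 0)"

fun op_pow :: "'i set \<Rightarrow> 'i oper \<Rightarrow> nat \<Rightarrow> 'i oper" where
  "op_pow S A 0 = op_id S"
| "op_pow S A (Suc n) = op_mult S A (op_pow S A n)"

definition supported_op :: "'i set \<Rightarrow> 'i oper \<Rightarrow> bool" where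
  "supported_op S A \<longleftrightarrow> (\<forall>i j. i \<notin> S \<or> j \<notin> S \<longrightarrow> A i j = 0)"

definition is_unitary :: "'i set \<Rightarrow> 'i oper \<Rightarrow> bool" where
  "is_unitary S U \<longleftrightarrow> supported_op S U \<and>
     (\<forall>i\<in>S. \<forall>j\<in>S. (\<Sum>k\<in>S. U i k * cnj (U j k)) = (if i = j then 1 else 0))"

definition is_projector :: "'i set \<Rightarrow> 'i oper \<Rightarrow> bool" where
  "is_projector S P \<longleftrightarrow> supported_op S P \<and> (\<forall>i j. P i j = cnj (P j i)) \<and> op_mult S P P = P"

definition is_state :: "'i set \<Rightarrow> 'i vect \<Rightarrow> bool" where
  "is_state S \<psi> \<longleftrightarrow> (\<forall>i. i \<notin> S \<longrightarrow> \<psi> i = 0) \<and> vnorm S \<psi> = 1"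

definition tensor :: "'i oper \<Rightarrow> 'j oper \<Rightarrow> ('i \<times> 'j) oper" where
  "tensor A B = (\<lambda>(i1, i2) (j1, j2). A i1 j1 * B i2 j2)"

(* O^f : |x>|y>|w> \<mapsto> |x>|y xor f(x)>|w> on the carrier S *)
definition query_unitary :: "bidx set \<Rightarrow> (bs \<Rightarrow> bs) \<Rightarrow> bidx oper" where
  "query_unitary S f = (\<lambda>(x, y, w) (x', y', w').
     if (x, y, w) \<in> S \<and> (x', y', w') \<in> S \<and> x = x' \<and> w = w' \<and> y = bxor y' (f x) then 1 else 0)"

definition query_op :: "bidx set \<Rightarrow> bidx oper \<Rightarrow> (bs \<Rightarrow> bs) \<Rightarrow> bidx oper" where
  "query_op S U f = op_mult S U (query_unitary S f)"

definition query_proj :: "bidx set \<Rightarrow> bs list \<Rightarrow> bidx oper" where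
  "query_proj S v = (\<lambda>(x, y, w) j. if (x, y, w) = j \<and> j \<in> S \<and> x \<in> set v then 1 else 0)"

definition reprogram :: "(bs \<Rightarrow> bs) \<Rightarrow> bs list \<Rightarrow> bs list \<Rightarrow> (bs \<Rightarrow> bs)" where
  "reprogram f v z = foldr (\<lambda>(a, b) h. h(a := b)) (zip v z) f"

(* bivariate real polynomial p(a,b), represented as a polynomial in a with
   coefficients polynomials in b *)
definition eval_poly2 :: "real poly poly \<Rightarrow> real \<Rightarrow> real \<Rightarrow> real" where
  "eval_poly2 P a b = poly (poly P [:b:]) a"

end

theory Submission
  imports Defs
begin

(*
  The reprogrammed oracle F_{v,z} agrees with F off the inputs v, so an oracle step with F_{v,z}
  and one with F differ by at most twice the weight of the query input register on v. Telescoping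
  over the queries of both parties bounds the cross difference (A^qB - At^qB)(B^qC - Bt^qC) psi,
  where A, B query F_{v,z} and At, Bt query F, by 4 sum_{k,l} |(P_v x P_v) A^k B^l psi|.
  In each of the three remaining hybrids one party queries the original oracle, so its final
  state does not depend on z; as that party's projectors Pi^w are orthogonal, their weights sum
  to at most 1 over w, and averaging over z bounds the weight of Pi^{g(z)} by p_max.
  Squaring the triangle inequality gives the constants 9 and 16, and Jensen's inequality for the
  square root turns the query weights into sqrt M.
*)

definition sqnorm :: "'i set \<Rightarrow> 'i vect \<Rightarrow> real" where
  "sqnorm S v = (\<Sum>i\<in>S. (cmod (v i))\<^sup>2)"

lemma sqnorm_nonneg: "0 \<le> sqnorm S v"
  unfolding sqnorm_def by (simp add: sum_nonneg)

lemma vnorm_eq_sqrt_sqnorm: "vnorm S v = sqrt (sqnorm S v)"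
  unfolding vnorm_def sqnorm_def ..

lemma vnorm_nonneg: "0 \<le> vnorm S v"
  by (simp add: vnorm_eq_sqrt_sqnorm sqnorm_nonneg)

lemma vnorm_power2: "(vnorm S v)\<^sup>2 = sqnorm S v"
  by (simp add: vnorm_eq_sqrt_sqnorm sqnorm_nonneg)

lemma vnorm_le_iff_sqnorm_le: "vnorm S x \<le> vnorm S y \<longleftrightarrow> sqnorm S x \<le> sqnorm S y"
  by (simp add: vnorm_eq_sqrt_sqnorm)

lemma vnorm_eq_L2_set: "vnorm S v = L2_set (\<lambda>i. cmod (v i)) S"
  unfolding vnorm_def L2_set_def ..

lemma vnorm_add_le: "vnorm S (\<lambda>i. x i + y i) \<le> vnorm S x + vnorm S y"
proof -
  have "vnorm S (\<lambda>i. x i + y i) \<le> L2_set (\<lambda>i. cmod (x i) + cmod (y i)) S"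
    unfolding vnorm_eq_L2_set by (rule L2_set_mono) (auto intro: norm_triangle_ineq)
  also have "\<dots> \<le> vnorm S x + vnorm S y"
    unfolding vnorm_eq_L2_set by (rule L2_set_triangle_ineq)
  finally show ?thesis .
qed

lemma vnorm_diff_le: "vnorm S (\<lambda>i. x i - y i) \<le> vnorm S x + vnorm S y"
  using vnorm_add_le[of S x "\<lambda>i. - y i"] by (simp add: vnorm_def)

definition cinner :: "'i set \<Rightarrow> 'i vect \<Rightarrow> 'i vect \<Rightarrow> complex" where
  "cinner S x y = (\<Sum>i\<in>S. cnj (x i) * y i)"

lemma cinner_self: "cinner S x x = of_real (sqnorm S x)"
proof -
  have "cnj (x i) * x i = of_real ((cmod (x i))\<^sup>2)" for i
    by (metis complex_norm_square mult.commute)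
  then show ?thesis unfolding cinner_def sqnorm_def of_real_sum by simp
qed

lemma norm_cinner_le: "cmod (cinner S x y) \<le> vnorm S x * vnorm S y"
proof -
  have "cmod (cinner S x y) \<le> (\<Sum>i\<in>S. cmod (cnj (x i) * y i))"
    unfolding cinner_def by (rule norm_sum)
  also have "\<dots> = (\<Sum>i\<in>S. \<bar>cmod (x i)\<bar> * \<bar>cmod (y i)\<bar>)"
    by (simp add: norm_mult)
  also have "\<dots> \<le> vnorm S x * vnorm S y"
    unfolding vnorm_eq_L2_set by (rule L2_set_mult_ineq)
  finally show ?thesis .
qed

lemma cinner_sum_left: "cinner S (\<lambda>i. \<Sum>w\<in>W. x w i) y = (\<Sum>w\<in>W. cinner S (x w) y)"
  unfolding cinner_def by (simp add: sum_distrib_right sum.swap[of _ S W])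

lemma cinner_sum_right: "cinner S x (\<lambda>i. \<Sum>w\<in>W. y w i) = (\<Sum>w\<in>W. cinner S x (y w))"
  unfolding cinner_def by (simp add: sum_distrib_left sum.swap[of _ S W])

lemma selfadjoint_idempotent_norm:
  assumes selfadjoint: "\<And>x y. cinner S x (G y) = cinner S (G x) y"
    and idempotent: "\<And>x. G (G x) = G x"
  shows "cinner S u (G u) = of_real (sqnorm S (G u))" and "vnorm S (G u) \<le> vnorm S u"
proof -
  show cinner_eq: "cinner S u (G u) = of_real (sqnorm S (G u))"
    using selfadjoint[of u "G u"] idempotent[of u] by (simp add: cinner_self)
  have "(vnorm S (G u))\<^sup>2 \<le> vnorm S u * vnorm S (G u)"
    using norm_cinner_le[of S u "G u"] cinner_eq sqnorm_nonneg[of S "G u"]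
    by (simp add: vnorm_power2)
  then show "vnorm S (G u) \<le> vnorm S u"
    using vnorm_nonneg[of S "G u"] vnorm_nonneg[of S u]
    by (metis less_eq_real_def mult_le_cancel_right power2_eq_square)
qed

lemma op_apply_mult: "op_apply S (op_mult S A B) v = op_apply S A (op_apply S B v)"
proof
  fix i
  have "op_apply S (op_mult S A B) v i = (\<Sum>j\<in>S. \<Sum>k\<in>S. A i k * B k j * v j)"
    unfolding op_apply_def op_mult_def by (simp only: sum_distrib_right)
  also have "\<dots> = (\<Sum>k\<in>S. \<Sum>j\<in>S. A i k * B k j * v j)"
    by (rule sum.swap)
  also have "\<dots> = op_apply S A (op_apply S B v) i"
    unfolding op_apply_def by (simp only: sum_distrib_left mult.assoc)
  finally show "op_apply S (op_mult S A B) v i = op_apply S A (op_apply S B v) i" .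
qed

lemma op_apply_cong: "(\<And>i. i \<in> S \<Longrightarrow> v i = w i) \<Longrightarrow> op_apply S A v = op_apply S A w"
  unfolding op_apply_def by simp

lemma op_apply_id: "finite S \<Longrightarrow> op_apply S (op_id S) v = (\<lambda>i. if i \<in> S then v i else 0)"
  unfolding op_apply_def op_id_def by (auto simp: if_distrib[of "\<lambda>c. c * _"] cong: if_cong)

lemma op_apply_sum: "op_apply S A (\<lambda>i. \<Sum>w\<in>W. v w i) = (\<lambda>i. \<Sum>w\<in>W. op_apply S A (v w) i)"
  unfolding op_apply_def by (auto simp: sum_distrib_left sum.swap[of _ S W])

definition adjoint :: "'i oper \<Rightarrow> 'i oper" where
  "adjoint A = (\<lambda>i j. cnj (A j i))"

lemma cinner_op_apply: "cinner S x (op_apply S A y) = cinner S (op_apply S (adjoint A) x) y"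
proof -
  have "cinner S x (op_apply S A y) = (\<Sum>i\<in>S. \<Sum>k\<in>S. cnj (x i) * (A i k * y k))"
    unfolding cinner_def op_apply_def by (simp only: sum_distrib_left)
  also have "\<dots> = (\<Sum>k\<in>S. \<Sum>i\<in>S. cnj (x i) * (A i k * y k))"
    by (rule sum.swap)
  also have "\<dots> = cinner S (op_apply S (adjoint A) x) y"
    unfolding cinner_def op_apply_def adjoint_def
    by (simp add: sum_distrib_right sum_distrib_left mult_ac)
  finally show ?thesis .
qed

definition contraction :: "'i set \<Rightarrow> ('i vect \<Rightarrow> 'i vect) \<Rightarrow> bool" where
  "contraction S F \<longleftrightarrow> (\<forall>x. vnorm S (F x) \<le> vnorm S x)"

lemma contractionD: "contraction S F \<Longrightarrow> vnorm S (F x) \<le> vnorm S x"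
  unfolding contraction_def by blast

lemma contraction_comp: "contraction S F \<Longrightarrow> contraction S G \<Longrightarrow> contraction S (\<lambda>x. F (G x))"
  unfolding contraction_def by (auto intro: order_trans)

lemma contraction_funpow: "contraction S F \<Longrightarrow> contraction S (F ^^ n)"
  unfolding contraction_def by (induction n) (auto intro: order_trans)

lemma projector_selfadjoint: "is_projector S P \<Longrightarrow> cinner S x (op_apply S P y) = cinner S (op_apply S P x) y"
proof -
  assume "is_projector S P"
  then have hermitian: "\<And>i j. P i j = cnj (P j i)"
    unfolding is_projector_def by blast
  have "adjoint P = P"
    unfolding adjoint_def by (intro ext) (rule hermitian[symmetric])
  then show ?thesis using cinner_op_apply[of S x P y] by simp
qed

lemma projector_idempotent: "is_projector S P \<Longrightarrow> op_apply S P (op_apply S P x) = op_apply S P x"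
  unfolding is_projector_def by (metis op_apply_mult)

lemma contraction_projector: "is_projector S P \<Longrightarrow> contraction S (op_apply S P)"
  unfolding contraction_def
  by (blast intro: selfadjoint_idempotent_norm(2) projector_selfadjoint projector_idempotent)

lemma sqnorm_sum_orthogonal_projectors_le:
  assumes "finite W"
    and proj: "\<And>w. w \<in> W \<Longrightarrow> is_projector S (P w)"
    and orth: "\<And>w w'. w \<in> W \<Longrightarrow> w' \<in> W \<Longrightarrow> w \<noteq> w' \<Longrightarrow> op_mult S (P w) (P w') = (\<lambda>_ _. 0)"
  shows "(\<Sum>w\<in>W. sqnorm S (op_apply S (P w) u)) \<le> sqnorm S u"
proof -
  \<comment> \<open>The sum of the projectors is itself a projector.\<close>
  define G where "G = (\<lambda>x i. \<Sum>w\<in>W. op_apply S (P w) x i)"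
  have selfadjoint: "cinner S x (G y) = cinner S (G x) y" for x y
    unfolding G_def cinner_sum_left cinner_sum_right using projector_selfadjoint[OF proj] by simp
  have PP: "op_apply S (P w) (op_apply S (P w') x) i = (if w' = w then op_apply S (P w) x i else 0)"
    if "w \<in> W" "w' \<in> W" for w w' x i
  proof (cases "w = w'")
    case True then show ?thesis using projector_idempotent[OF proj[OF that(1)]] by simp
  next
    case False
    have "op_apply S (P w) (op_apply S (P w') x) = op_apply S (\<lambda>_ _. 0) x"
      using orth[OF that False] op_apply_mult[of S "P w" "P w'" x] by simp
    then show ?thesis using False by (simp add: op_apply_def)
  qed
  have idempotent: "G (G x) = G x" for x
    unfolding G_def op_apply_sum using \<open>finite W\<close> by (simp add: PP)
  have "of_real (\<Sum>w\<in>W. sqnorm S (op_apply S (P w) u)) = (\<Sum>w\<in>W. cinner S u (op_apply S (P w) u))"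
    unfolding of_real_sum
    by (intro sum.cong refl selfadjoint_idempotent_norm(1)[symmetric]
        projector_selfadjoint projector_idempotent proj)
  also have "\<dots> = of_real (sqnorm S (G u))"
    unfolding G_def cinner_sum_right[symmetric]
    by (rule selfadjoint_idempotent_norm(1)[where G = G, OF selfadjoint idempotent, unfolded G_def])
  finally have "(\<Sum>w\<in>W. sqnorm S (op_apply S (P w) u)) = sqnorm S (G u)"
    by (simp only: of_real_eq_iff)
  then show ?thesis
    using selfadjoint_idempotent_norm(2)[where G = G, OF selfadjoint idempotent, of u]
    by (simp add: vnorm_le_iff_sqnorm_le)
qed

lemma contraction_unitary:
  assumes U: "is_unitary S U" and "finite S"
  shows "contraction S (op_apply S U)"
proof -
  \<comment> \<open>\<open>U\<^sup>* U\<close> is a projector, and \<open>\<parallel>U u\<parallel>\<^sup>2 = \<langle>u, U\<^sup>* U u\<rangle>\<close>.\<close>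
  define G where "G = (\<lambda>u. op_apply S (adjoint U) (op_apply S U u))"
  have "op_mult S U (adjoint U) = op_id S"
  proof (intro ext)
    fix i j
    show "op_mult S U (adjoint U) i j = op_id S i j"
      using U unfolding is_unitary_def supported_op_def op_mult_def adjoint_def op_id_def
      by (cases "i \<in> S"; cases "j \<in> S") auto
  qed
  then have UUadj: "op_apply S U (op_apply S (adjoint U) w) = (\<lambda>i. if i \<in> S then w i else 0)" for w
    using op_apply_mult[of S U "adjoint U" w] op_apply_id[OF \<open>finite S\<close>] by simp
  have idempotent: "G (G x) = G x" for x
    unfolding G_def UUadj by (rule op_apply_cong) simp
  have selfadjoint: "cinner S x (G y) = cinner S (G x) y" for x y
    unfolding G_def using cinner_op_apply[of S x "adjoint U"] cinner_op_apply[of S _ U y]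
    by (simp add: adjoint_def)
  have "sqnorm S (op_apply S U u) = sqnorm S (G u)" for u
  proof -
    have "cinner S u (G u) = cinner S (op_apply S U u) (op_apply S U u)"
      unfolding G_def using cinner_op_apply[of S u "adjoint U"] by (simp add: adjoint_def)
    then show ?thesis
      using selfadjoint_idempotent_norm(1)[where G = G, OF selfadjoint idempotent] by (simp add: cinner_self)
  qed
  then show ?thesis
    unfolding contraction_def vnorm_le_iff_sqnorm_le
    using selfadjoint_idempotent_norm(2)[where G = G, OF selfadjoint idempotent]
    by (simp add: vnorm_le_iff_sqnorm_le)
qed

lemma contraction_op_pow:
  assumes "finite S" and "contraction S (op_apply S A)"
  shows "contraction S (op_apply S (op_pow S A k))"
  unfolding contraction_def
proof (induction k)
  case 0
  show ?case using \<open>finite S\<close> by (simp add: op_apply_id vnorm_def)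
next
  case (Suc k)
  then show ?case
    using contractionD[OF assms(2)] by (auto simp: op_apply_mult intro: order_trans)
qed

section \<open>The hybrid argument\<close>

definition preserves_diff :: "('i vect \<Rightarrow> 'i vect) \<Rightarrow> bool" where
  "preserves_diff F \<longleftrightarrow> (\<forall>x y. F (\<lambda>p. x p - y p) = (\<lambda>p. F x p - F y p))"

lemma preserves_diffD: "preserves_diff F \<Longrightarrow> F (\<lambda>p. x p - y p) = (\<lambda>p. F x p - F y p)"
  unfolding preserves_diff_def by blast

lemma preserves_diff_funpow: "preserves_diff F \<Longrightarrow> preserves_diff (F ^^ n)"
  unfolding preserves_diff_def by (induction n) auto

definition commuting :: "('a \<Rightarrow> 'a) \<Rightarrow> ('a \<Rightarrow> 'a) \<Rightarrow> bool" where
  "commuting F G \<longleftrightarrow> (\<forall>x. F (G x) = G (F x))"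

lemma commutingD: "commuting F G \<Longrightarrow> F (G x) = G (F x)"
  unfolding commuting_def by blast

lemma commuting_sym: "commuting F G \<Longrightarrow> commuting G F"
  unfolding commuting_def by simp

lemma commuting_funpow_right: "commuting F G \<Longrightarrow> commuting F (G ^^ n)"
  unfolding commuting_def by (induction n) auto

lemma commuting_funpow: "commuting F G \<Longrightarrow> commuting (F ^^ m) (G ^^ n)"
  by (rule commuting_funpow_right, rule commuting_sym, rule commuting_funpow_right, rule commuting_sym)

lemma agree_off_diff_bound:
  assumes "preserves_diff F" "preserves_diff Ft" "contraction S F" "contraction S Ft"
    and agree: "F (\<lambda>p. x p - Q x p) = Ft (\<lambda>p. x p - Q x p)"
  shows "vnorm S (\<lambda>p. F x p - Ft x p) \<le> 2 * vnorm S (Q x)"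
proof -
  have "(\<lambda>p. F x p - F (Q x) p) = (\<lambda>p. Ft x p - Ft (Q x) p)"
    using agree by (simp add: preserves_diffD[OF assms(1)] preserves_diffD[OF assms(2)])
  then have "F x p - Ft x p = F (Q x) p - Ft (Q x) p" for p
    by (drule_tac fun_cong[of _ _ p]) (simp add: algebra_simps)
  then have "(\<lambda>p. F x p - Ft x p) = (\<lambda>p. F (Q x) p - Ft (Q x) p)"
    by simp
  then have "vnorm S (\<lambda>p. F x p - Ft x p) \<le> vnorm S (F (Q x)) + vnorm S (Ft (Q x))"
    using vnorm_diff_le[of S "F (Q x)" "Ft (Q x)"] by simp
  also have "\<dots> \<le> 2 * vnorm S (Q x)"
    using contractionD[OF assms(3)] contractionD[OF assms(4)] by (smt (verit))
  finally show ?thesis .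
qed

lemma hybrid_telescope:
  assumes "preserves_diff Ft" "contraction S Ft"
    and step: "\<And>x. vnorm S (\<lambda>p. F x p - Ft x p) \<le> 2 * vnorm S (Q x)"
  shows "vnorm S (\<lambda>p. (F ^^ q) x p - (Ft ^^ q) x p) \<le> (\<Sum>k<q. 2 * vnorm S (Q ((F ^^ k) x)))"
proof (induction q)
  case 0
  then show ?case by (simp add: vnorm_def)
next
  case (Suc q)
  define y y' where "y = (F ^^ q) x" and "y' = (Ft ^^ q) x"
  have "(\<lambda>p. (F ^^ Suc q) x p - (Ft ^^ Suc q) x p) = (\<lambda>p. (F y p - Ft y p) + Ft (\<lambda>p. y p - y' p) p)"
    unfolding y_def y'_def preserves_diffD[OF assms(1)] by simp
  then have "vnorm S (\<lambda>p. (F ^^ Suc q) x p - (Ft ^^ Suc q) x p)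
      \<le> vnorm S (\<lambda>p. F y p - Ft y p) + vnorm S (Ft (\<lambda>p. y p - y' p))"
    using vnorm_add_le[of S "\<lambda>p. F y p - Ft y p" "Ft (\<lambda>p. y p - y' p)"] by simp
  also have "\<dots> \<le> 2 * vnorm S (Q y) + vnorm S (\<lambda>p. y p - y' p)"
    using step[of y] contractionD[OF assms(2), of "\<lambda>p. y p - y' p"] by simp
  also have "\<dots> \<le> (\<Sum>k<Suc q. 2 * vnorm S (Q ((F ^^ k) x)))"
    using Suc unfolding y_def y'_def by simp
  finally show ?case .
qed

lemma cross_difference_bound:
  fixes \<psi> :: "'i vect" and qB qC :: nat
  assumes lin: "preserves_diff \<alpha>" "preserves_diff \<alpha>t" "preserves_diff Qa" "preserves_diff \<beta>t"
    and contr: "contraction S \<alpha>t" "contraction S \<beta>t"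
    and comm: "\<forall>F\<in>{\<alpha>, Qa}. \<forall>G\<in>{\<beta>, \<beta>t}. commuting F G" "commuting Qa Qb"
    and step\<alpha>: "\<And>x. vnorm S (\<lambda>p. \<alpha> x p - \<alpha>t x p) \<le> 2 * vnorm S (Qa x)"
    and step\<beta>: "\<And>x. vnorm S (\<lambda>p. \<beta> x p - \<beta>t x p) \<le> 2 * vnorm S (Qb x)"
  defines "y \<equiv> \<lambda>p. (\<beta> ^^ qC) \<psi> p - (\<beta>t ^^ qC) \<psi> p"
  shows "vnorm S (\<lambda>p. (\<alpha> ^^ qB) y p - (\<alpha>t ^^ qB) y p)
    \<le> 4 * (\<Sum>k<qB. \<Sum>l<qC. vnorm S (Qa (Qb ((\<alpha> ^^ k) ((\<beta> ^^ l) \<psi>)))))"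
proof -
  have "vnorm S (\<lambda>p. (\<alpha> ^^ qB) y p - (\<alpha>t ^^ qB) y p) \<le> (\<Sum>k<qB. 2 * vnorm S (Qa ((\<alpha> ^^ k) y)))"
    by (rule hybrid_telescope[OF lin(2) contr(1) step\<alpha>])
  also have "\<dots> \<le> (\<Sum>k<qB. 2 * (\<Sum>l<qC. 2 * vnorm S (Qa (Qb ((\<alpha> ^^ k) ((\<beta> ^^ l) \<psi>))))))"
  proof (intro sum_mono mult_left_mono)
    fix k
    define x where "x = Qa ((\<alpha> ^^ k) \<psi>)"
    have commutes_past: "Qa ((\<alpha> ^^ k) ((G ^^ qC) \<psi>)) = (G ^^ qC) x" if "G \<in> {\<beta>, \<beta>t}" for G
    proof -
      have c: "commuting (\<alpha> ^^ k) (G ^^ qC)" "commuting Qa (G ^^ qC)"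
        using comm(1) that by (auto intro: commuting_funpow commuting_funpow_right)
      show ?thesis unfolding x_def by (simp only: commutingD[OF c(1)] commutingD[OF c(2)])
    qed
    have "Qa ((\<alpha> ^^ k) y) = (\<lambda>p. (\<beta> ^^ qC) x p - (\<beta>t ^^ qC) x p)"
      unfolding y_def preserves_diffD[OF preserves_diff_funpow[OF lin(1)]] preserves_diffD[OF lin(3)]
      using commutes_past by simp
    then have "vnorm S (Qa ((\<alpha> ^^ k) y)) \<le> (\<Sum>l<qC. 2 * vnorm S (Qb ((\<beta> ^^ l) x)))"
      using hybrid_telescope[OF lin(4) contr(2) step\<beta>, of qC x] by simp
    also have "(\<Sum>l<qC. 2 * vnorm S (Qb ((\<beta> ^^ l) x)))
        = (\<Sum>l<qC. 2 * vnorm S (Qa (Qb ((\<alpha> ^^ k) ((\<beta> ^^ l) \<psi>)))))"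
    proof -
      have c: "commuting (\<alpha> ^^ k) (\<beta> ^^ l)" "commuting Qa (\<beta> ^^ l)" for l
        using comm(1) by (auto intro: commuting_funpow commuting_funpow_right)
      show ?thesis
        unfolding x_def by (simp only: commutingD[OF c(1)] commutingD[OF c(2)] commutingD[OF comm(2)])
    qed
    finally show "vnorm S (Qa ((\<alpha> ^^ k) y)) \<le> (\<Sum>l<qC. 2 * vnorm S (Qa (Qb ((\<alpha> ^^ k) ((\<beta> ^^ l) \<psi>)))))" .
  qed simp
  also have "\<dots> = 4 * (\<Sum>k<qB. \<Sum>l<qC. vnorm S (Qa (Qb ((\<alpha> ^^ k) ((\<beta> ^^ l) \<psi>)))))"
    by (simp add: sum_distrib_left)
  finally show ?thesis .
qed

lemma power2_le_of_le_sum4: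
  fixes e a b c t :: real
  assumes "0 \<le> e" "e \<le> 1" "0 \<le> a" "a \<le> 1" "0 \<le> b" "b \<le> 1" "0 \<le> c" "c \<le> 1" "0 \<le> t"
    and le: "e \<le> a + b + c + t"
  shows "e\<^sup>2 \<le> 3 * (a\<^sup>2 + b\<^sup>2 + c\<^sup>2) + 4 * t"
proof -
  define s where "s = a + b + c"
  have s2: "s\<^sup>2 \<le> 3 * (a\<^sup>2 + b\<^sup>2 + c\<^sup>2)"
  proof -
    have "3 * (a\<^sup>2 + b\<^sup>2 + c\<^sup>2) - s\<^sup>2 = (a - b)\<^sup>2 + (b - c)\<^sup>2 + (a - c)\<^sup>2"
      by (simp add: s_def power2_eq_square algebra_simps)
    then show ?thesis by (smt (verit) zero_le_power2)
  qed
  show ?thesis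
  proof (cases "e \<le> s")
    case True
    then have "e\<^sup>2 \<le> s\<^sup>2" using assms by (intro power_mono) auto
    then show ?thesis using s2 assms by linarith
  next
    case False
    \<comment> \<open>then \<open>e - s \<le> t\<close> and \<open>e + s \<le> 4\<close>\<close>
    have "e\<^sup>2 - s\<^sup>2 = (e - s) * (e + s)" by (simp add: power2_eq_square algebra_simps)
    also have "\<dots> \<le> t * 4"
      using False assms unfolding s_def by (intro mult_mono) auto
    finally show ?thesis using s2 by linarith
  qed
qed

lemma vnorm_projected_funpow_le:
  assumes "contraction S Pa" "contraction S F" "commuting Pb F"
  shows "vnorm S (Pa (Pb ((F ^^ n) x))) \<le> vnorm S (Pb x)"
proof -
  have "vnorm S (Pa (Pb ((F ^^ n) x))) \<le> vnorm S ((F ^^ n) (Pb x))"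
    using contractionD[OF assms(1)] commutingD[OF commuting_funpow_right[OF assms(3)]] by metis
  also have "\<dots> \<le> vnorm S (Pb x)"
    by (rule contractionD[OF contraction_funpow[OF assms(2)]])
  finally show ?thesis .
qed

lemma vnorm_le_hybrids:
  assumes "preserves_diff P"
  shows "vnorm S (P \<phi>) \<le> vnorm S (P a) + vnorm S (P b) + vnorm S (P c) + vnorm S (P (\<lambda>p. (\<phi> p - a p) - (b p - c p)))"
proof -
  let ?d = "\<lambda>p. (\<phi> p - a p) - (b p - c p)"
  have "P \<phi> = (\<lambda>p. ((P ?d p + P a p) + P b p) - P c p)"
    by (simp add: preserves_diffD[OF assms])
  then show ?thesis
    using vnorm_diff_le[of S "\<lambda>p. (P ?d p + P a p) + P b p" "P c"]
      vnorm_add_le[of S "\<lambda>p. P ?d p + P a p" "P b"] vnorm_add_le[of S "P ?d" "P a"]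
    by simp
qed

lemma projected_hybrids_le:
  assumes contr: "\<forall>F\<in>{\<alpha>, \<alpha>t, \<beta>, Pa, Pb}. contraction S F"
    and comm: "\<forall>F\<in>{\<alpha>, \<alpha>t, Pa}. \<forall>G\<in>{\<beta>, Pb}. commuting F G"
  shows "(vnorm S (Pa (Pb ((\<alpha> ^^ qB) ((\<beta>t ^^ qC) \<psi>)))))\<^sup>2
      + (vnorm S (Pa (Pb ((\<alpha>t ^^ qB) ((\<beta> ^^ qC) \<psi>)))))\<^sup>2
      + (vnorm S (Pa (Pb ((\<alpha>t ^^ qB) ((\<beta>t ^^ qC) \<psi>)))))\<^sup>2
    \<le> 2 * sqnorm S (Pb ((\<beta>t ^^ qC) \<psi>)) + sqnorm S (Pa ((\<alpha>t ^^ qB) \<psi>))"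
proof -
  have contractive: "contraction S F" if "F \<in> {\<alpha>, \<alpha>t, \<beta>, Pa, Pb}" for F
    using contr that by blast
  have commute: "commuting F G" if "F \<in> {\<alpha>, \<alpha>t, Pa}" "G \<in> {\<beta>, Pb}" for F G
    using comm that by blast
  have "sqnorm S (Pa (Pb ((F ^^ qB) ((\<beta>t ^^ qC) \<psi>)))) \<le> sqnorm S (Pb ((\<beta>t ^^ qC) \<psi>))"
    if "F \<in> {\<alpha>, \<alpha>t}" for F
  proof -
    have "contraction S Pa" "contraction S F" "commuting Pb F"
      using that contractive commuting_sym[OF commute[of F Pb]] by auto
    then show ?thesis
      unfolding vnorm_le_iff_sqnorm_le[symmetric] by (rule vnorm_projected_funpow_le)
  qed
  moreover have "sqnorm S (Pa (Pb ((\<alpha>t ^^ qB) ((\<beta> ^^ qC) \<psi>)))) \<le> sqnorm S (Pa ((\<alpha>t ^^ qB) \<psi>))"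
  proof -
    have c: "commuting Pa Pb" "commuting (\<alpha>t ^^ qB) (\<beta> ^^ qC)"
      by (simp_all add: commute commuting_funpow)
    have "Pa (Pb ((\<alpha>t ^^ qB) ((\<beta> ^^ qC) \<psi>))) = Pb (Pa ((\<beta> ^^ qC) ((\<alpha>t ^^ qB) \<psi>)))"
      by (simp only: commutingD[OF c(1)] commutingD[OF c(2)])
    moreover have "contraction S Pb" "contraction S \<beta>" "commuting Pa \<beta>"
      by (simp_all add: contractive commute)
    ultimately show ?thesis
      unfolding vnorm_le_iff_sqnorm_le[symmetric] by (simp add: vnorm_projected_funpow_le)
  qed
  ultimately show ?thesis
    unfolding vnorm_power2 by (smt (verit) insertCI)
qed

text \<open>
  \<open>\<alpha>\<close> and \<open>\<beta>\<close> are the oracle steps of the two parties with the reprogrammed oracle, \<open>\<alpha>t\<close> and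
  \<open>\<beta>t\<close> those with the original one; they differ only on the range of the query projections
  \<open>Qa\<close> and \<open>Qb\<close>. \<open>Pa\<close> and \<open>Pb\<close> are the final projections.
\<close>
lemma bipartite_hybrid_bound:
  fixes \<alpha> \<alpha>t \<beta> \<beta>t Qa Qb Pa Pb :: "'i vect \<Rightarrow> 'i vect"
  assumes lin: "\<forall>F\<in>{\<alpha>, \<alpha>t, \<beta>, \<beta>t, Qa, Pa, Pb}. preserves_diff F"
    and contr: "\<forall>F\<in>{\<alpha>, \<alpha>t, \<beta>, \<beta>t, Pa, Pb}. contraction S F"
    and comm: "\<forall>F\<in>{\<alpha>, \<alpha>t, Qa, Pa}. \<forall>G\<in>{\<beta>, \<beta>t, Qb, Pb}. commuting F G"
    and agree\<alpha>: "\<And>x. \<alpha> (\<lambda>p. x p - Qa x p) = \<alpha>t (\<lambda>p. x p - Qa x p)"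
    and agree\<beta>: "\<And>x. \<beta> (\<lambda>p. x p - Qb x p) = \<beta>t (\<lambda>p. x p - Qb x p)"
    and \<psi>: "vnorm S \<psi> \<le> 1"
  shows "(vnorm S (Pa (Pb ((\<alpha> ^^ qB) ((\<beta> ^^ qC) \<psi>)))))\<^sup>2
    \<le> 6 * sqnorm S (Pb ((\<beta>t ^^ qC) \<psi>)) + 3 * sqnorm S (Pa ((\<alpha>t ^^ qB) \<psi>))
      + 16 * (\<Sum>k<qB. \<Sum>l<qC. vnorm S (Qa (Qb ((\<alpha> ^^ k) ((\<beta> ^^ l) \<psi>)))))"
proof -
  have linear: "preserves_diff F" if "F \<in> {\<alpha>, \<alpha>t, \<beta>, \<beta>t, Qa, Pa, Pb}" for F
    using lin that by blast
  have contractive: "contraction S F" if "F \<in> {\<alpha>, \<alpha>t, \<beta>, \<beta>t, Pa, Pb}" for F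
    using contr that by blast
  define P where "P = (\<lambda>x. Pa (Pb x))"
  define \<phi> a b c where "\<phi> = (\<alpha> ^^ qB) ((\<beta> ^^ qC) \<psi>)" and "a = (\<alpha> ^^ qB) ((\<beta>t ^^ qC) \<psi>)"
    and "b = (\<alpha>t ^^ qB) ((\<beta> ^^ qC) \<psi>)" and "c = (\<alpha>t ^^ qB) ((\<beta>t ^^ qC) \<psi>)"
  define y where "y = (\<lambda>p. (\<beta> ^^ qC) \<psi> p - (\<beta>t ^^ qC) \<psi> p)"
  have contr_P: "contraction S P"
    unfolding P_def by (simp add: contraction_comp contractive)
  have cross: "vnorm S (P (\<lambda>p. (\<phi> p - a p) - (b p - c p)))
      \<le> 4 * (\<Sum>k<qB. \<Sum>l<qC. vnorm S (Qa (Qb ((\<alpha> ^^ k) ((\<beta> ^^ l) \<psi>)))))"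
  proof -
    have "(\<lambda>p. (\<phi> p - a p) - (b p - c p)) = (\<lambda>p. (\<alpha> ^^ qB) y p - (\<alpha>t ^^ qB) y p)"
      unfolding y_def \<phi>_def a_def b_def c_def
      by (simp add: preserves_diffD preserves_diff_funpow linear)
    then have "vnorm S (P (\<lambda>p. (\<phi> p - a p) - (b p - c p))) \<le> vnorm S (\<lambda>p. (\<alpha> ^^ qB) y p - (\<alpha>t ^^ qB) y p)"
      using contractionD[OF contr_P] by simp
    also have "\<dots> \<le> 4 * (\<Sum>k<qB. \<Sum>l<qC. vnorm S (Qa (Qb ((\<alpha> ^^ k) ((\<beta> ^^ l) \<psi>)))))"
    proof -
      have commute: "commuting F G" if "F \<in> {\<alpha>, \<alpha>t, Qa, Pa}" "G \<in> {\<beta>, \<beta>t, Qb, Pb}" for F G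
        using comm that by blast
      have "vnorm S (\<lambda>p. \<alpha> x p - \<alpha>t x p) \<le> 2 * vnorm S (Qa x)"
        "vnorm S (\<lambda>p. \<beta> x p - \<beta>t x p) \<le> 2 * vnorm S (Qb x)" for x
        by (intro agree_off_diff_bound agree\<alpha> agree\<beta> linear contractive; simp)+
      then show ?thesis
        unfolding y_def by (intro cross_difference_bound linear contractive commute ballI) auto
    qed
    finally show ?thesis .
  qed
  have at_most_one: "vnorm S (P ((F ^^ qB) ((G ^^ qC) \<psi>))) \<le> 1"
    if "F \<in> {\<alpha>, \<alpha>t}" "G \<in> {\<beta>, \<beta>t}" for F G
  proof -
    have "contraction S F" "contraction S G"
      using that by (auto intro: contractive)
    then have "vnorm S (P ((F ^^ qB) ((G ^^ qC) \<psi>))) \<le> vnorm S \<psi>"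
      using contractionD[OF contr_P] contractionD[OF contraction_funpow] by (meson order_trans)
    then show ?thesis using \<psi> by simp
  qed
  have lin_P: "preserves_diff P"
    unfolding P_def preserves_diff_def by (simp add: preserves_diffD linear)
  have squared: "(vnorm S (P \<phi>))\<^sup>2 \<le> 3 * ((vnorm S (P a))\<^sup>2 + (vnorm S (P b))\<^sup>2 + (vnorm S (P c))\<^sup>2)
      + 4 * vnorm S (P (\<lambda>p. (\<phi> p - a p) - (b p - c p)))"
    using vnorm_le_hybrids[OF lin_P, of S \<phi> a b c] at_most_one unfolding \<phi>_def a_def b_def c_def
    by (intro power2_le_of_le_sum4) (auto simp: vnorm_nonneg)
  have "(vnorm S (P a))\<^sup>2 + (vnorm S (P b))\<^sup>2 + (vnorm S (P c))\<^sup>2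
      \<le> 2 * sqnorm S (Pb ((\<beta>t ^^ qC) \<psi>)) + sqnorm S (Pa ((\<alpha>t ^^ qB) \<psi>))"
    unfolding P_def a_def b_def c_def using contr comm by (intro projected_hybrids_le) simp_all
  with squared cross show ?thesis
    by (simp only: P_def \<phi>_def) (smt (verit))
qed

section \<open>Local operators on a bipartite system\<close>

definition act_fst :: "'a set \<Rightarrow> 'a oper \<Rightarrow> ('a \<times> 'b) vect \<Rightarrow> ('a \<times> 'b) vect" where
  "act_fst SA A ch = (\<lambda>p. op_apply SA A (\<lambda>a. ch (a, snd p)) (fst p))"

definition act_snd :: "'b set \<Rightarrow> 'b oper \<Rightarrow> ('a \<times> 'b) vect \<Rightarrow> ('a \<times> 'b) vect" where
  "act_snd SB B ch = act_fst SB B (ch \<circ> prod.swap) \<circ> prod.swap"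

lemma sqnorm_product: "sqnorm (SA \<times> SB) ch = (\<Sum>b\<in>SB. sqnorm SA (\<lambda>a. ch (a, b)))"
  unfolding sqnorm_def sum.cartesian_product' by (rule sum.swap)

lemma sqnorm_swap: "sqnorm (SA \<times> SB) (ch \<circ> prod.swap) = sqnorm (SB \<times> SA) ch"
  unfolding sqnorm_product by (simp add: sqnorm_def sum.swap[of _ SB])

lemma vnorm_swap: "vnorm (SA \<times> SB) (ch \<circ> prod.swap) = vnorm (SB \<times> SA) ch"
  by (simp add: vnorm_eq_sqrt_sqnorm sqnorm_swap)

lemma act_fst_mult: "act_fst SA (op_mult SA A B) ch = act_fst SA A (act_fst SA B ch)"
  unfolding act_fst_def by (simp add: op_apply_mult)

lemma act_snd_mult: "act_snd SB (op_mult SB A B) ch = act_snd SB A (act_snd SB B ch)"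
  unfolding act_snd_def by (simp add: act_fst_mult comp_assoc)

lemma act_fst_id:
  assumes "finite SA" and "\<And>a b. a \<notin> SA \<Longrightarrow> ch (a, b) = 0"
  shows "act_fst SA (op_id SA) ch = ch"
  using assms unfolding act_fst_def by (auto simp: op_apply_id)

lemma act_snd_id:
  assumes "finite SB" and "\<And>a b. b \<notin> SB \<Longrightarrow> ch (a, b) = 0"
  shows "act_snd SB (op_id SB) ch = ch"
  unfolding act_snd_def using assms by (subst act_fst_id) (auto simp: comp_assoc)

lemma preserves_diff_act_fst: "preserves_diff (act_fst SA A)"
  unfolding preserves_diff_def act_fst_def op_apply_def
  by (simp add: right_diff_distrib sum_subtractf)

lemma preserves_diff_act_snd: "preserves_diff (act_snd SB B)"
  unfolding preserves_diff_def act_snd_def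
proof (intro allI)
  fix x y :: "('a \<times> 'b) vect"
  have "(\<lambda>p. x p - y p) \<circ> prod.swap = (\<lambda>p. (x \<circ> prod.swap) p - (y \<circ> prod.swap) p)"
    by auto
  then show "act_fst SB B ((\<lambda>p. x p - y p) \<circ> prod.swap) \<circ> prod.swap
    = (\<lambda>p. (act_fst SB B (x \<circ> prod.swap) \<circ> prod.swap) p - (act_fst SB B (y \<circ> prod.swap) \<circ> prod.swap) p)"
    by (simp add: preserves_diffD[OF preserves_diff_act_fst] comp_def)
qed

lemma commuting_act_fst_act_snd: "commuting (act_fst SA A) (act_snd SB B)"
  unfolding commuting_def act_snd_def act_fst_def op_apply_def
  by (simp add: comp_def sum_distrib_left mult.left_commute sum.swap[of _ SA SB])

lemma op_apply_tensor: "op_apply (SA \<times> SB) (tensor A B) ch = act_fst SA A (act_snd SB B ch)"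
  unfolding op_apply_def tensor_def act_fst_def act_snd_def
  by (auto simp: sum.cartesian_product' sum_distrib_left mult.assoc split_def comp_def)

lemma contraction_act_fst:
  "contraction SA (op_apply SA A) \<Longrightarrow> contraction (SA \<times> SB) (act_fst SA A)"
  unfolding contraction_def vnorm_le_iff_sqnorm_le sqnorm_product act_fst_def
  by (auto intro: sum_mono)

lemma contraction_act_snd:
  assumes "contraction SB (op_apply SB B)"
  shows "contraction (SA \<times> SB) (act_snd SB B)"
  unfolding contraction_def act_snd_def vnorm_swap
proof
  fix ch
  show "vnorm (SB \<times> SA) (act_fst SB B (ch \<circ> prod.swap)) \<le> vnorm (SA \<times> SB) ch"
    using contractionD[OF contraction_act_fst[OF assms], where x = "ch \<circ> prod.swap"] by (simp add: vnorm_swap)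
qed

lemma sqnorm_sum_act_fst_le:
  assumes "\<And>u. (\<Sum>w\<in>W. sqnorm SA (op_apply SA (P w) u)) \<le> sqnorm SA u"
  shows "(\<Sum>w\<in>W. sqnorm (SA \<times> SB) (act_fst SA (P w) ch)) \<le> sqnorm (SA \<times> SB) ch"
  unfolding sqnorm_product act_fst_def
  using assms by (simp add: sum.swap[of _ SB W] sum_mono)

lemma sqnorm_sum_act_snd_le:
  assumes "\<And>u. (\<Sum>w\<in>W. sqnorm SB (op_apply SB (P w) u)) \<le> sqnorm SB u"
  shows "(\<Sum>w\<in>W. sqnorm (SA \<times> SB) (act_snd SB (P w) ch)) \<le> sqnorm (SA \<times> SB) ch"
  using sqnorm_sum_act_fst_le[where ch = "ch \<circ> prod.swap", OF assms]
  unfolding act_snd_def sqnorm_swap .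

lemma act_fst_agree_off:
  assumes "\<And>u. op_apply SA A (\<lambda>a. u a - op_apply SA Q u a) = op_apply SA A' (\<lambda>a. u a - op_apply SA Q u a)"
  shows "act_fst SA A (\<lambda>p. ch p - act_fst SA Q ch p) = act_fst SA A' (\<lambda>p. ch p - act_fst SA Q ch p)"
  unfolding act_fst_def using assms by simp

lemma act_snd_agree_off:
  assumes "\<And>u. op_apply SB B (\<lambda>b. u b - op_apply SB Q u b) = op_apply SB B' (\<lambda>b. u b - op_apply SB Q u b)"
  shows "act_snd SB B (\<lambda>p. ch p - act_snd SB Q ch p) = act_snd SB B' (\<lambda>p. ch p - act_snd SB Q ch p)"
  using act_fst_agree_off[of SB B Q B' "ch \<circ> prod.swap", OF assms]
  unfolding act_snd_def by (simp add: comp_def)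

lemma act_fst_op_pow: "act_fst SA (op_pow SA A k) ch = (act_fst SA A ^^ k) (act_fst SA (op_id SA) ch)"
  by (induction k) (simp_all add: act_fst_mult)

lemma act_snd_op_pow: "act_snd SB (op_pow SB B l) ch = (act_snd SB B ^^ l) (act_snd SB (op_id SB) ch)"
  by (induction l) (simp_all add: act_snd_mult)

lemma op_apply_tensor_op_pow:
  assumes "finite SA" "finite SB" and "\<And>p. p \<notin> SA \<times> SB \<Longrightarrow> ch p = 0"
  shows "op_apply (SA \<times> SB) (tensor (op_pow SA A k) (op_pow SB B l)) ch
    = (act_fst SA A ^^ k) ((act_snd SB B ^^ l) ch)"
proof -
  have "act_snd SB (op_id SB) ch = ch" "act_fst SA (op_id SA) ch = ch"
    using assms by (auto intro!: act_fst_id act_snd_id)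
  moreover have "act_fst SA (op_id SA) ((act_snd SB B ^^ l) ch) = (act_snd SB B ^^ l) (act_fst SA (op_id SA) ch)"
    by (rule commutingD[OF commuting_funpow_right[OF commuting_act_fst_act_snd]])
  ultimately show ?thesis
    unfolding op_apply_tensor act_fst_op_pow act_snd_op_pow by simp
qed

lemma contraction_tensor:
  assumes "contraction SA (op_apply SA A)" "contraction SB (op_apply SB B)"
  shows "contraction (SA \<times> SB) (op_apply (SA \<times> SB) (tensor A B))"
proof -
  have "op_apply (SA \<times> SB) (tensor A B) = (\<lambda>ch. act_fst SA A (act_snd SB B ch))"
    by (rule ext) (rule op_apply_tensor)
  then show ?thesis
    using contraction_comp[OF contraction_act_fst[OF assms(1)] contraction_act_snd[OF assms(2)]] by simp
qed

lemma sqnorm_sum_projected_act_fst_funpow_le: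
  assumes "finite W" and "\<And>w. w \<in> W \<Longrightarrow> is_projector SA (P w)"
    and "\<And>w w'. w \<in> W \<Longrightarrow> w' \<in> W \<Longrightarrow> w \<noteq> w' \<Longrightarrow> op_mult SA (P w) (P w') = (\<lambda>_ _. 0)"
    and "contraction SA (op_apply SA A)"
  shows "(\<Sum>w\<in>W. sqnorm (SA \<times> SB) (act_fst SA (P w) ((act_fst SA A ^^ q) ch))) \<le> sqnorm (SA \<times> SB) ch"
proof -
  have "(\<Sum>w\<in>W. sqnorm (SA \<times> SB) (act_fst SA (P w) ((act_fst SA A ^^ q) ch)))
      \<le> sqnorm (SA \<times> SB) ((act_fst SA A ^^ q) ch)"
    using assms by (intro sqnorm_sum_act_fst_le sqnorm_sum_orthogonal_projectors_le)
  also have "\<dots> \<le> sqnorm (SA \<times> SB) ch"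
    using contractionD[OF contraction_funpow[OF contraction_act_fst[OF assms(4)]]]
    unfolding vnorm_le_iff_sqnorm_le .
  finally show ?thesis .
qed

lemma sqnorm_sum_projected_act_snd_funpow_le:
  assumes "finite W" and "\<And>w. w \<in> W \<Longrightarrow> is_projector SB (P w)"
    and "\<And>w w'. w \<in> W \<Longrightarrow> w' \<in> W \<Longrightarrow> w \<noteq> w' \<Longrightarrow> op_mult SB (P w) (P w') = (\<lambda>_ _. 0)"
    and "contraction SB (op_apply SB B)"
  shows "(\<Sum>w\<in>W. sqnorm (SA \<times> SB) (act_snd SB (P w) ((act_snd SB B ^^ q) ch))) \<le> sqnorm (SA \<times> SB) ch"
proof -
  have "(\<Sum>w\<in>W. sqnorm (SA \<times> SB) (act_snd SB (P w) ((act_snd SB B ^^ q) ch)))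
      \<le> sqnorm (SA \<times> SB) ((act_snd SB B ^^ q) ch)"
    using assms by (intro sqnorm_sum_act_snd_le sqnorm_sum_orthogonal_projectors_le)
  also have "\<dots> \<le> sqnorm (SA \<times> SB) ch"
    using contractionD[OF contraction_funpow[OF contraction_act_snd[OF assms(4)]]]
    unfolding vnorm_le_iff_sqnorm_le .
  finally show ?thesis .
qed

lemma length_bxor [simp]: "length (bxor a b) = min (length a) (length b)"
  unfolding bxor_def by simp

lemma bxor_bxor: "length a = length b \<Longrightarrow> bxor (bxor a b) b = a"
proof (induction a arbitrary: b)
  case Nil
  then show ?case by (simp add: bxor_def)
next
  case (Cons x a)
  then show ?case by (cases b) (auto simp: bxor_def)
qed

lemma bxor_eq_iff:
  assumes "length y = length c" "length y' = length c"
  shows "y = bxor y' c \<longleftrightarrow> y' = bxor y c"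
  using assms bxor_bxor by metis

lemma finite_reg_space: "finite X \<Longrightarrow> finite W \<Longrightarrow> finite (reg_space X m W)"
  using finite_lists_length_eq[of "UNIV :: bool set" m]
  unfolding reg_space_def strings_of_len_def by simp

lemma reprogram_Cons: "reprogram f (a # v) (b # z) = (reprogram f v z)(a := b)"
  unfolding reprogram_def by simp

lemma reprogram_notin: "x \<notin> set v \<Longrightarrow> reprogram f v z x = f x"
proof (induction v arbitrary: z)
  case Nil
  then show ?case by (simp add: reprogram_def)
next
  case (Cons a v)
  then show ?case by (cases z) (simp_all add: reprogram_def reprogram_Cons)
qed

lemma reprogram_in_strings_of_len:
  assumes "f x \<in> strings_of_len m" "set z \<subseteq> strings_of_len m"
  shows "reprogram f v z x \<in> strings_of_len m"
  using assms
proof (induction v arbitrary: z)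
  case Nil
  then show ?case by (simp add: reprogram_def)
next
  case (Cons a v)
  then show ?case by (cases z) (simp_all add: reprogram_def reprogram_Cons)
qed

lemma op_apply_query_unitary:
  assumes "finite X" "finite W" and f: "\<forall>x\<in>X. f x \<in> strings_of_len m"
  shows "op_apply (reg_space X m W) (query_unitary (reg_space X m W) f) u
    = (\<lambda>(x, y, w). if (x, y, w) \<in> reg_space X m W then u (x, bxor y (f x), w) else 0)"
proof (intro ext, clarify)
  fix x y w
  let ?S = "reg_space X m W"
  show "op_apply ?S (query_unitary ?S f) u (x, y, w) = (if (x, y, w) \<in> ?S then u (x, bxor y (f x), w) else 0)"
  proof (cases "(x, y, w) \<in> ?S")
    case False
    then show ?thesis unfolding op_apply_def query_unitary_def by simp
  next
    case True
    then have "length y = m" "length (f x) = m"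
      using f unfolding reg_space_def strings_of_len_def by auto
    moreover have "(x, bxor y (f x), w) \<in> ?S"
      using True f unfolding reg_space_def strings_of_len_def by auto
    ultimately have "query_unitary ?S f (x, y, w) k * u k = (if k = (x, bxor y (f x), w) then u k else 0)"
      if "k \<in> ?S" for k
      using True that bxor_eq_iff[of y "f x"]
      unfolding query_unitary_def reg_space_def strings_of_len_def by (cases k) auto
    then show ?thesis
      using True \<open>(x, bxor y (f x), w) \<in> ?S\<close> finite_reg_space[OF assms(1,2)]
      unfolding op_apply_def by simp
  qed
qed

lemma vnorm_query_unitary:
  assumes "finite X" "finite W" and f: "\<forall>x\<in>X. f x \<in> strings_of_len m"
  shows "vnorm (reg_space X m W) (op_apply (reg_space X m W) (query_unitary (reg_space X m W) f) u)
    = vnorm (reg_space X m W) u"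
proof -
  let ?S = "reg_space X m W"
  \<comment> \<open>The oracle permutes the basis by the involution \<open>\<tau>\<close>.\<close>
  define \<tau> where "\<tau> = (\<lambda>(x, y, w). (x, bxor y (f x), w :: nat))"
  have \<tau>: "\<tau> k \<in> ?S \<and> \<tau> (\<tau> k) = k" if "k \<in> ?S" for k
    using that f bxor_bxor unfolding \<tau>_def reg_space_def strings_of_len_def by auto
  have "sqnorm ?S (op_apply ?S (query_unitary ?S f) u) = (\<Sum>k\<in>?S. (cmod (u (\<tau> k)))\<^sup>2)"
    unfolding sqnorm_def op_apply_query_unitary[OF assms]
    by (intro sum.cong refl) (auto simp: \<tau>_def)
  also have "\<dots> = sqnorm ?S u"
    unfolding sqnorm_def by (rule sum.reindex_bij_witness[of _ \<tau> \<tau>]) (auto simp: \<tau>)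
  finally show ?thesis by (simp add: vnorm_eq_sqrt_sqnorm)
qed

lemma contraction_query_op:
  assumes "finite X" "finite W" "\<forall>x\<in>X. f x \<in> strings_of_len m"
    and "is_unitary (reg_space X m W) U"
  shows "contraction (reg_space X m W) (op_apply (reg_space X m W) (query_op (reg_space X m W) U f))"
  using contractionD[OF contraction_unitary[OF assms(4) finite_reg_space[OF assms(1,2)]]]
    vnorm_query_unitary[OF assms(1-3)]
  unfolding contraction_def query_op_def op_apply_mult by metis

lemma op_apply_query_proj:
  assumes "finite S"
  shows "op_apply S (query_proj S v) u = (\<lambda>k. if k \<in> S \<and> fst k \<in> set v then u k else 0)"
proof
  fix k
  have "op_apply S (query_proj S v) u k = (\<Sum>j\<in>S. if j = k then (if fst k \<in> set v then u k else 0) else 0)"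
    unfolding op_apply_def query_proj_def by (intro sum.cong refl) (auto simp: split_def)
  then show "op_apply S (query_proj S v) u k = (if k \<in> S \<and> fst k \<in> set v then u k else 0)"
    using assms by simp
qed

lemma contraction_query_proj: "finite S \<Longrightarrow> contraction S (op_apply S (query_proj S v))"
  unfolding contraction_def vnorm_le_iff_sqnorm_le sqnorm_def
  by (auto simp: op_apply_query_proj intro: sum_mono)

lemma query_op_agree_off:
  assumes "\<And>x. x \<notin> set v \<Longrightarrow> f' x = f x" and "finite S"
  shows "op_apply S (query_op S U f') (\<lambda>i. u i - op_apply S (query_proj S v) u i)
    = op_apply S (query_op S U f) (\<lambda>i. u i - op_apply S (query_proj S v) u i)"
proof -
  \<comment> \<open>The vector vanishes on the query inputs in \<open>v\<close>, where alone the oracles differ.\<close>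
  define w where "w = (\<lambda>i. u i - op_apply S (query_proj S v) u i)"
  have "query_unitary S f' i k * w k = query_unitary S f i k * w k" if "k \<in> S" for i k
    using that assms unfolding w_def op_apply_query_proj[OF \<open>finite S\<close>] query_unitary_def
    by (auto simp: split_def)
  then have "op_apply S (query_unitary S f') w = op_apply S (query_unitary S f) w"
    unfolding op_apply_def by (intro ext sum.cong) simp_all
  then show ?thesis
    unfolding query_op_def op_apply_mult w_def by simp
qed

lemma reprogrammed_run_bound:
  fixes \<psi> :: "(bidx \<times> bidx) vect"
  assumes SB: "SB = reg_space X m WB" and SC: "SC = reg_space X m WC"
    and fin: "finite X" "finite WB" "finite WC"
    and f: "\<forall>x\<in>X. f x \<in> strings_of_len m" and f': "\<forall>x\<in>X. f' x \<in> strings_of_len m"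
    and agree: "\<And>x. x \<notin> set v \<Longrightarrow> f' x = f x"
    and UB: "is_unitary SB UB" and UC: "is_unitary SC UC"
    and \<psi>: "is_state (SB \<times> SC) \<psi>"
    and PB: "is_projector SB PB" and PC: "is_projector SC PC"
  shows "(vnorm (SB \<times> SC) (op_apply (SB \<times> SC) (tensor PB PC)
      (op_apply (SB \<times> SC) (tensor (op_pow SB (query_op SB UB f') qB) (op_pow SC (query_op SC UC f') qC)) \<psi>)))\<^sup>2
    \<le> 6 * sqnorm (SB \<times> SC) (act_snd SC PC ((act_snd SC (query_op SC UC f) ^^ qC) \<psi>))
      + 3 * sqnorm (SB \<times> SC) (act_fst SB PB ((act_fst SB (query_op SB UB f) ^^ qB) \<psi>))
      + 16 * (\<Sum>k<qB. \<Sum>l<qC. vnorm (SB \<times> SC) (op_apply (SB \<times> SC) (tensor (query_proj SB v) (query_proj SC v))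
          (op_apply (SB \<times> SC) (tensor (op_pow SB (query_op SB UB f') k) (op_pow SC (query_op SC UC f') l)) \<psi>)))"
proof -
  have finB: "finite SB" and finC: "finite SC"
    using SB SC fin by (simp_all add: finite_reg_space)
  have \<psi>_supp: "\<And>p. p \<notin> SB \<times> SC \<Longrightarrow> \<psi> p = 0" and \<psi>_norm: "vnorm (SB \<times> SC) \<psi> = 1"
    using \<psi> unfolding is_state_def by blast+
  have query_contr: "contraction SB (op_apply SB (query_op SB UB g))"
    "contraction SC (op_apply SC (query_op SC UC g))" if "\<forall>x\<in>X. g x \<in> strings_of_len m" for g
    using SB SC fin that UB UC by (auto intro: contraction_query_op)
  have runs: "op_apply (SB \<times> SC) (tensor (op_pow SB A k) (op_pow SC B l)) \<psi>
      = (act_fst SB A ^^ k) ((act_snd SC B ^^ l) \<psi>)" for A B k l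
    by (rule op_apply_tensor_op_pow[OF finB finC \<psi>_supp])
  show ?thesis
    unfolding runs unfolding op_apply_tensor
  proof (rule bipartite_hybrid_bound[where \<alpha> = "act_fst SB (query_op SB UB f')"
        and \<alpha>t = "act_fst SB (query_op SB UB f)" and \<beta> = "act_snd SC (query_op SC UC f')"
        and \<beta>t = "act_snd SC (query_op SC UC f)" and Qa = "act_fst SB (query_proj SB v)"
        and Qb = "act_snd SC (query_proj SC v)" and Pa = "act_fst SB PB" and Pb = "act_snd SC PC"])
    show "\<forall>F\<in>{act_fst SB (query_op SB UB f'), act_fst SB (query_op SB UB f),
        act_snd SC (query_op SC UC f'), act_snd SC (query_op SC UC f),
        act_fst SB (query_proj SB v), act_fst SB PB, act_snd SC PC}. preserves_diff F"
      by (simp add: preserves_diff_act_fst preserves_diff_act_snd)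
    show "\<forall>F\<in>{act_fst SB (query_op SB UB f'), act_fst SB (query_op SB UB f),
        act_snd SC (query_op SC UC f'), act_snd SC (query_op SC UC f),
        act_fst SB PB, act_snd SC PC}. contraction (SB \<times> SC) F"
      using query_contr[OF f] query_contr[OF f'] contraction_projector[OF PB] contraction_projector[OF PC]
      by (simp add: contraction_act_fst contraction_act_snd)
    show "\<forall>F\<in>{act_fst SB (query_op SB UB f'), act_fst SB (query_op SB UB f),
        act_fst SB (query_proj SB v), act_fst SB PB}.
      \<forall>G\<in>{act_snd SC (query_op SC UC f'), act_snd SC (query_op SC UC f),
        act_snd SC (query_proj SC v), act_snd SC PC}. commuting F G"
      by (simp add: commuting_act_fst_act_snd)
    show "act_fst SB (query_op SB UB f') (\<lambda>p. x p - act_fst SB (query_proj SB v) x p)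
      = act_fst SB (query_op SB UB f) (\<lambda>p. x p - act_fst SB (query_proj SB v) x p)"
      for x :: "(bidx \<times> bidx) vect"
      by (rule act_fst_agree_off[OF query_op_agree_off[OF agree finB]])
    show "act_snd SC (query_op SC UC f') (\<lambda>p. x p - act_snd SC (query_proj SC v) x p)
      = act_snd SC (query_op SC UC f) (\<lambda>p. x p - act_snd SC (query_proj SC v) x p)"
      for x :: "(bidx \<times> bidx) vect"
      by (rule act_snd_agree_off[OF query_op_agree_off[OF agree finC]])
    show "vnorm (SB \<times> SC) \<psi> \<le> 1"
      using \<psi>_norm by simp
  qed
qed

section \<open>Expectations of bounded functions\<close>

lemma integrable_pmf_bounded:
  fixes h :: "'a \<Rightarrow> real"
  assumes "\<And>x. x \<in> set_pmf p \<Longrightarrow> \<bar>h x\<bar> \<le> B"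
  shows "integrable (measure_pmf p) h"
  by (rule measure_pmf.integrable_const_bound[where B = B]) (auto intro: AE_pmfI assms)

lemma expectation_mono_pmf:
  fixes h h' :: "'a \<Rightarrow> real"
  assumes "\<And>x. x \<in> set_pmf p \<Longrightarrow> h x \<le> h' x"
    and "\<And>x. x \<in> set_pmf p \<Longrightarrow> \<bar>h x\<bar> \<le> B" and "\<And>x. x \<in> set_pmf p \<Longrightarrow> \<bar>h' x\<bar> \<le> B'"
  shows "measure_pmf.expectation p h \<le> measure_pmf.expectation p h'"
  using assms by (intro integral_mono_AE integrable_pmf_bounded AE_pmfI)

lemma expectation_bounds_pmf:
  fixes h :: "'a \<Rightarrow> real"
  assumes "\<And>x. x \<in> set_pmf p \<Longrightarrow> 0 \<le> h x \<and> h x \<le> B"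
  shows "0 \<le> measure_pmf.expectation p h \<and> measure_pmf.expectation p h \<le> B"
proof
  show "0 \<le> measure_pmf.expectation p h"
    using assms by (intro integral_nonneg_AE AE_pmfI) auto
  have "measure_pmf.expectation p h \<le> measure_pmf.expectation p (\<lambda>_. B)"
    using assms by (intro expectation_mono_pmf[where B = B and B' = "\<bar>B\<bar>"]) auto
  then show "measure_pmf.expectation p h \<le> B" by simp
qed

lemma expectation_le_sqrt_expectation_power2:
  fixes h :: "'a \<Rightarrow> real"
  assumes "\<And>x. x \<in> set_pmf p \<Longrightarrow> \<bar>h x\<bar> \<le> B"
  shows "measure_pmf.expectation p h \<le> sqrt (measure_pmf.expectation p (\<lambda>x. (h x)\<^sup>2))"
proof -
  have "integrable (measure_pmf p) h"
    using assms by (rule integrable_pmf_bounded)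
  moreover have "integrable (measure_pmf p) (\<lambda>x. (h x)\<^sup>2)"
  proof (rule integrable_pmf_bounded)
    show "\<bar>(h x)\<^sup>2\<bar> \<le> B\<^sup>2" if "x \<in> set_pmf p" for x
      using power_mono[OF assms[OF that], of 2] by simp
  qed
  ultimately have "(measure_pmf.expectation p h)\<^sup>2 \<le> measure_pmf.expectation p (\<lambda>x. (h x)\<^sup>2)"
    using measure_pmf.variance_positive[of p h] measure_pmf.variance_eq[of p h] by simp
  then show ?thesis by (rule real_le_rsqrt)
qed

lemma expectation_sqrt_le_sqrt_expectation:
  fixes h :: "'a \<Rightarrow> real"
  assumes "\<And>x. x \<in> set_pmf p \<Longrightarrow> 0 \<le> h x \<and> h x \<le> B"
  shows "measure_pmf.expectation p (\<lambda>x. sqrt (h x)) \<le> sqrt (measure_pmf.expectation p h)"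
proof -
  have "measure_pmf.expectation p (\<lambda>x. sqrt (h x)) \<le> sqrt (measure_pmf.expectation p (\<lambda>x. (sqrt (h x))\<^sup>2))"
    using assms by (intro expectation_le_sqrt_expectation_power2[where B = "sqrt B"]) auto
  also have "measure_pmf.expectation p (\<lambda>x. (sqrt (h x))\<^sup>2) = measure_pmf.expectation p h"
    using assms by (intro integral_cong_AE AE_pmfI) auto
  finally show ?thesis .
qed

lemma sum_lessThan_eq_uniform_expectation:
  "0 < q \<Longrightarrow> (\<Sum>k<q. h k) = real q * measure_pmf.expectation (pmf_of_set {..<q}) h"
  by (subst integral_pmf_of_set) auto

lemma expectation_le_max_class_prob:
  fixes Z :: "'z pmf" and g :: "'z \<Rightarrow> 'w" and h :: "'w \<Rightarrow> real"
  assumes R: "\<And>z. z \<in> set_pmf Z \<Longrightarrow> g z \<in> R"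
    and h_nonneg: "\<And>w. 0 \<le> h w"
    and h_sum: "\<And>W. finite W \<Longrightarrow> W \<subseteq> R \<Longrightarrow> sum h W \<le> 1"
  shows "measure_pmf.expectation Z (\<lambda>z. h (g z)) \<le> Sup ((\<lambda>w. measure_pmf.prob Z {z. g z = w}) ` R)"
proof -
  define \<mu> where "\<mu> = map_pmf g Z"
  define pm where "pm = Sup ((\<lambda>w. measure_pmf.prob Z {z. g z = w}) ` R)"
  have pmf_le: "pmf \<mu> w \<le> pm" if "w \<in> R" for w
  proof -
    have "bdd_above ((\<lambda>w. measure_pmf.prob Z {z. g z = w}) ` R)"
      by (rule bdd_aboveI[of _ 1]) auto
    then show ?thesis
      unfolding \<mu>_def pm_def pmf_map vimage_def using that by (intro cSup_upper) auto
  qed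
  have supp: "w \<in> R" if "pmf \<mu> w \<noteq> 0" for w
  proof -
    have "w \<in> set_pmf \<mu>"
      using that by (simp add: set_pmf_iff)
    then show ?thesis
      unfolding \<mu>_def using R by auto
  qed
  obtain z0 where "z0 \<in> set_pmf Z"
    using set_pmf_not_empty[of Z] by blast
  then have pm_nonneg: "0 \<le> pm"
    using pmf_le[OF R[of z0]] pmf_nonneg[of \<mu> "g z0"] by linarith
  have "norm (pmf \<mu> w * h w) \<le> pmf \<mu> w" for w
  proof (cases "pmf \<mu> w = 0")
    case False
    then have "h w \<le> 1" using h_sum[of "{w}"] supp by simp
    then show ?thesis using h_nonneg[of w] by (simp add: abs_mult mult_left_le)
  qed simp
  then have abs_summable: "Infinite_Set_Sum.abs_summable_on (\<lambda>w. pmf \<mu> w * h w) UNIV"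
    by (rule abs_summable_on_comparison_test'[OF pmf_abs_summable])
  have "measure_pmf.expectation Z (\<lambda>z. h (g z)) = measure_pmf.expectation \<mu> h"
    unfolding \<mu>_def by simp
  also have "\<dots> = infsum (\<lambda>w. pmf \<mu> w * h w) UNIV"
    by (simp add: pmf_expectation_eq_infsetsum infsetsum_infsum[OF abs_summable])
  also have "\<dots> \<le> pm"
  proof (rule infsum_le_finite_sums)
    show "(\<lambda>w. pmf \<mu> w * h w) summable_on UNIV"
      using abs_summable abs_summable_equivalent abs_summable_summable by blast
    fix W :: "'w set" assume "finite W"
    have "(\<Sum>w\<in>W. pmf \<mu> w * h w) = (\<Sum>w\<in>W \<inter> R. pmf \<mu> w * h w)"
      using \<open>finite W\<close> supp by (intro sum.mono_neutral_right) auto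
    also have "\<dots> \<le> (\<Sum>w\<in>W \<inter> R. pm * h w)"
      using pmf_le h_nonneg by (intro sum_mono mult_right_mono) auto
    also have "\<dots> \<le> pm"
      using h_sum[of "W \<inter> R"] \<open>finite W\<close> pm_nonneg
      by (simp add: sum_distrib_left[symmetric] mult_left_le)
    finally show "(\<Sum>w\<in>W. pmf \<mu> w * h w) \<le> pm" .
  qed
  finally show ?thesis unfolding pm_def .
qed

lemma iterated_expectation_le_sqrt:
  fixes h :: "'a \<Rightarrow> 'b \<Rightarrow> real"
  assumes h: "\<And>f z. f \<in> set_pmf F \<Longrightarrow> z \<in> set_pmf Z \<Longrightarrow> 0 \<le> h f z \<and> h f z \<le> 1"
  shows "measure_pmf.expectation F (\<lambda>f. measure_pmf.expectation Z (h f))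
    \<le> sqrt (measure_pmf.expectation F (\<lambda>f. measure_pmf.expectation Z (\<lambda>z. (h f z)\<^sup>2)))"
proof -
  have EZ_h: "0 \<le> measure_pmf.expectation Z (h f) \<and> measure_pmf.expectation Z (h f) \<le> 1"
    if "f \<in> set_pmf F" for f
    using h[OF that] by (intro expectation_bounds_pmf)
  have EZ_h2: "0 \<le> measure_pmf.expectation Z (\<lambda>z. (h f z)\<^sup>2) \<and> measure_pmf.expectation Z (\<lambda>z. (h f z)\<^sup>2) \<le> 1"
    if "f \<in> set_pmf F" for f
    using h[OF that] by (intro expectation_bounds_pmf) (auto intro: power_le_one)
  have "measure_pmf.expectation F (\<lambda>f. measure_pmf.expectation Z (h f))
      \<le> measure_pmf.expectation F (\<lambda>f. sqrt (measure_pmf.expectation Z (\<lambda>z. (h f z)\<^sup>2)))"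
  proof (rule expectation_mono_pmf[where B = 1 and B' = 1])
    show "measure_pmf.expectation Z (h f) \<le> sqrt (measure_pmf.expectation Z (\<lambda>z. (h f z)\<^sup>2))"
      if "f \<in> set_pmf F" for f
      using h[OF that] by (intro expectation_le_sqrt_expectation_power2[where B = 1]) auto
  qed (use EZ_h EZ_h2 in auto)
  also have "\<dots> \<le> sqrt (measure_pmf.expectation F (\<lambda>f. measure_pmf.expectation Z (\<lambda>z. (h f z)\<^sup>2)))"
    using EZ_h2 by (intro expectation_sqrt_le_sqrt_expectation[where B = 1])
  finally show ?thesis .
qed

lemma double_sum_sqrt_le_sqrt_uniform_expectation:
  fixes m :: "nat \<Rightarrow> nat \<Rightarrow> real"
  assumes "0 < qB" "0 < qC" and m: "\<And>k l. 0 \<le> m k l \<and> m k l \<le> 1"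
  shows "(\<Sum>k<qB. \<Sum>l<qC. sqrt (m k l))
    \<le> real qB * real qC * sqrt (measure_pmf.expectation (pmf_of_set {..<qB}) (\<lambda>k.
         measure_pmf.expectation (pmf_of_set {..<qC}) (\<lambda>l. m k l)))"
proof -
  define M where "M k = measure_pmf.expectation (pmf_of_set {..<qC}) (\<lambda>l. m k l)" for k
  have M: "0 \<le> M k \<and> M k \<le> 1" for k
    unfolding M_def using m by (intro expectation_bounds_pmf)
  have "(\<Sum>l<qC. sqrt (m k l)) \<le> real qC * sqrt (M k)" for k
    unfolding sum_lessThan_eq_uniform_expectation[OF assms(2)] M_def
    using m by (intro mult_left_mono expectation_sqrt_le_sqrt_expectation[where B = 1]) auto
  then have "(\<Sum>k<qB. \<Sum>l<qC. sqrt (m k l)) \<le> real qC * (\<Sum>k<qB. sqrt (M k))"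
    by (simp add: sum_distrib_left sum_mono)
  also have "\<dots> \<le> real qC * (real qB * sqrt (measure_pmf.expectation (pmf_of_set {..<qB}) M))"
    unfolding sum_lessThan_eq_uniform_expectation[OF assms(1)]
    using M by (intro mult_left_mono expectation_sqrt_le_sqrt_expectation[where B = 1]) auto
  finally show ?thesis
    unfolding M_def by (simp add: mult_ac)
qed

lemma expectation_double_sum_le_sqrt:
  fixes n :: "'a \<Rightarrow> 'b \<Rightarrow> nat \<Rightarrow> nat \<Rightarrow> real"
  assumes "0 < qB" "0 < qC"
    and n: "\<And>f z k l. f \<in> set_pmf F \<Longrightarrow> z \<in> set_pmf Z \<Longrightarrow> 0 \<le> n f z k l \<and> n f z k l \<le> 1"
  shows "measure_pmf.expectation F (\<lambda>f. measure_pmf.expectation Z (\<lambda>z. \<Sum>k<qB. \<Sum>l<qC. n f z k l))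
    \<le> real qB * real qC * sqrt (measure_pmf.expectation (pmf_of_set {..<qB}) (\<lambda>k.
         measure_pmf.expectation (pmf_of_set {..<qC}) (\<lambda>l.
         measure_pmf.expectation F (\<lambda>f. measure_pmf.expectation Z (\<lambda>z. (n f z k l)\<^sup>2)))))"
proof -
  have integrable_Z: "integrable (measure_pmf Z) (\<lambda>z. n f z k l)" if "f \<in> set_pmf F" for f k l
    using n[OF that] by (intro integrable_pmf_bounded[where B = 1]) auto
  have integrable_F: "integrable (measure_pmf F) (\<lambda>f. measure_pmf.expectation Z (\<lambda>z. n f z k l))" for k l
  proof (rule integrable_pmf_bounded[where B = 1])
    show "\<bar>measure_pmf.expectation Z (\<lambda>z. n f z k l)\<bar> \<le> 1" if "f \<in> set_pmf F" for f
      using expectation_bounds_pmf[of Z "\<lambda>z. n f z k l" 1] n[OF that] by auto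
  qed
  have "measure_pmf.expectation F (\<lambda>f. measure_pmf.expectation Z (\<lambda>z. \<Sum>k<qB. \<Sum>l<qC. n f z k l))
      = measure_pmf.expectation F (\<lambda>f. \<Sum>k<qB. \<Sum>l<qC. measure_pmf.expectation Z (\<lambda>z. n f z k l))"
    using integrable_Z by (intro integral_cong_AE AE_pmfI) (simp_all add: integral_sum integrable_sum)
  also have "\<dots> = (\<Sum>k<qB. \<Sum>l<qC. measure_pmf.expectation F (\<lambda>f. measure_pmf.expectation Z (\<lambda>z. n f z k l)))"
    using integrable_F by (simp add: integral_sum integrable_sum)
  also have "\<dots> \<le> (\<Sum>k<qB. \<Sum>l<qC. sqrt (measure_pmf.expectation F (\<lambda>f. measure_pmf.expectation Z (\<lambda>z. (n f z k l)\<^sup>2))))"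
    using n by (intro sum_mono iterated_expectation_le_sqrt)
  also have "\<dots> \<le> real qB * real qC * sqrt (measure_pmf.expectation (pmf_of_set {..<qB}) (\<lambda>k.
         measure_pmf.expectation (pmf_of_set {..<qC}) (\<lambda>l.
         measure_pmf.expectation F (\<lambda>f. measure_pmf.expectation Z (\<lambda>z. (n f z k l)\<^sup>2)))))"
    using n by (intro double_sum_sqrt_le_sqrt_uniform_expectation assms(1,2) expectation_bounds_pmf)
      (auto intro: power_le_one)
  finally show ?thesis .
qed

lemma expectation_le_class_weights:
  fixes L N :: "'z \<Rightarrow> real" and hB hC :: "'w \<Rightarrow> real" and g :: "'z \<Rightarrow> 'w"
  assumes gR: "\<And>z. z \<in> set_pmf Z \<Longrightarrow> g z \<in> R"
    and h_nonneg: "\<And>w. 0 \<le> hB w" "\<And>w. 0 \<le> hC w"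
    and h_sum: "\<And>W. finite W \<Longrightarrow> W \<subseteq> R \<Longrightarrow> sum hB W \<le> 1" "\<And>W. finite W \<Longrightarrow> W \<subseteq> R \<Longrightarrow> sum hC W \<le> 1"
    and L: "\<And>z. z \<in> set_pmf Z \<Longrightarrow> \<bar>L z\<bar> \<le> 1"
    and N: "\<And>z. z \<in> set_pmf Z \<Longrightarrow> 0 \<le> N z \<and> N z \<le> B"
    and pointwise: "\<And>z. z \<in> set_pmf Z \<Longrightarrow> L z \<le> 6 * hC (g z) + 3 * hB (g z) + 16 * N z"
  shows "measure_pmf.expectation Z L
    \<le> 9 * Sup ((\<lambda>w. measure_pmf.prob Z {z. g z = w}) ` R) + 16 * measure_pmf.expectation Z N"
proof -
  have h_le_1: "hB w \<le> 1" "hC w \<le> 1" if "w \<in> R" for w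
    using h_sum[of "{w}"] that by simp_all
  have integrable: "integrable (measure_pmf Z) (\<lambda>z. hB (g z))" "integrable (measure_pmf Z) (\<lambda>z. hC (g z))"
    "integrable (measure_pmf Z) N"
    by (rule integrable_pmf_bounded[where B = 1], use h_nonneg h_le_1 gR in simp)+
      (rule integrable_pmf_bounded[where B = B], use N in force)
  have "measure_pmf.expectation Z L \<le> measure_pmf.expectation Z (\<lambda>z. 6 * hC (g z) + 3 * hB (g z) + 16 * N z)"
  proof (rule expectation_mono_pmf[where B = 1 and B' = "9 + 16 * B"])
    fix z assume z: "z \<in> set_pmf Z"
    show "\<bar>6 * hC (g z) + 3 * hB (g z) + 16 * N z\<bar> \<le> 9 + 16 * B"
      using h_nonneg[of "g z"] h_le_1[OF gR[OF z]] N[OF z] by linarith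
  qed (use L pointwise in auto)
  also have "\<dots> = 6 * measure_pmf.expectation Z (\<lambda>z. hC (g z)) + 3 * measure_pmf.expectation Z (\<lambda>z. hB (g z))
      + 16 * measure_pmf.expectation Z N"
    using integrable by simp
  also have "\<dots> \<le> 9 * Sup ((\<lambda>w. measure_pmf.prob Z {z. g z = w}) ` R) + 16 * measure_pmf.expectation Z N"
    using expectation_le_max_class_prob[of Z g R hB, OF gR h_nonneg(1) h_sum(1)]
      expectation_le_max_class_prob[of Z g R hC, OF gR h_nonneg(2) h_sum(2)]
    by simp
  finally show ?thesis .
qed

text \<open>
  \<open>L f z\<close> is the success weight and \<open>n f z k l\<close> are the query weights; the weights \<open>hB f w\<close> and
  \<open>hC f w\<close> of the one-party hybrids do not depend on the reprogramming \<open>z\<close>.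
\<close>
lemma expectation_two_party_bound:
  fixes L :: "'f \<Rightarrow> 'z \<Rightarrow> real" and hB hC :: "'f \<Rightarrow> 'w \<Rightarrow> real" and g :: "'z \<Rightarrow> 'w"
    and n :: "'f \<Rightarrow> 'z \<Rightarrow> nat \<Rightarrow> nat \<Rightarrow> real"
  assumes "0 < qB" "0 < qC"
    and gR: "\<And>z. z \<in> set_pmf Z \<Longrightarrow> g z \<in> R"
    and h_nonneg: "\<And>f w. 0 \<le> hB f w" "\<And>f w. 0 \<le> hC f w"
    and h_sum: "\<And>f W. f \<in> set_pmf F \<Longrightarrow> finite W \<Longrightarrow> W \<subseteq> R \<Longrightarrow> sum (hB f) W \<le> 1"
      "\<And>f W. f \<in> set_pmf F \<Longrightarrow> finite W \<Longrightarrow> W \<subseteq> R \<Longrightarrow> sum (hC f) W \<le> 1"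
    and L: "\<And>f z. f \<in> set_pmf F \<Longrightarrow> z \<in> set_pmf Z \<Longrightarrow> 0 \<le> L f z \<and> L f z \<le> 1"
    and n: "\<And>f z k l. f \<in> set_pmf F \<Longrightarrow> z \<in> set_pmf Z \<Longrightarrow> 0 \<le> n f z k l \<and> n f z k l \<le> 1"
    and pointwise: "\<And>f z. f \<in> set_pmf F \<Longrightarrow> z \<in> set_pmf Z
      \<Longrightarrow> L f z \<le> 6 * hC f (g z) + 3 * hB f (g z) + 16 * (\<Sum>k<qB. \<Sum>l<qC. n f z k l)"
  shows "measure_pmf.expectation F (\<lambda>f. measure_pmf.expectation Z (L f))
    \<le> 9 * Sup ((\<lambda>w. measure_pmf.prob Z {z. g z = w}) ` R)
      + 16 * real qB * real qC * sqrt (measure_pmf.expectation (pmf_of_set {..<qB}) (\<lambda>k.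
          measure_pmf.expectation (pmf_of_set {..<qC}) (\<lambda>l.
          measure_pmf.expectation F (\<lambda>f. measure_pmf.expectation Z (\<lambda>z. (n f z k l)\<^sup>2)))))"
proof -
  define pm where "pm = Sup ((\<lambda>w. measure_pmf.prob Z {z. g z = w}) ` R)"
  define N where "N f z = (\<Sum>k<qB. \<Sum>l<qC. n f z k l)" for f z
  have N: "0 \<le> N f z \<and> N f z \<le> real qB * real qC" if "f \<in> set_pmf F" "z \<in> set_pmf Z" for f z
  proof -
    have "N f z \<le> (\<Sum>k<qB. \<Sum>l<qC. 1)"
      unfolding N_def using n[OF that] by (intro sum_mono) auto
    then show ?thesis
      unfolding N_def using n[OF that] by (auto intro: sum_nonneg)
  qed
  have EZ_N: "0 \<le> measure_pmf.expectation Z (N f) \<and> measure_pmf.expectation Z (N f) \<le> real qB * real qC"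
    and EZ_L: "0 \<le> measure_pmf.expectation Z (L f) \<and> measure_pmf.expectation Z (L f) \<le> 1"
    if "f \<in> set_pmf F" for f
    using N[OF that] L[OF that] by (intro expectation_bounds_pmf; simp)+
  have "measure_pmf.expectation F (\<lambda>f. measure_pmf.expectation Z (L f))
      \<le> measure_pmf.expectation F (\<lambda>f. 9 * pm + 16 * measure_pmf.expectation Z (N f))"
  proof (rule expectation_mono_pmf[where B = 1 and B' = "\<bar>9 * pm\<bar> + 16 * (real qB * real qC)"])
    fix f assume f: "f \<in> set_pmf F"
    show "measure_pmf.expectation Z (L f) \<le> 9 * pm + 16 * measure_pmf.expectation Z (N f)"
      unfolding pm_def
      by (rule expectation_le_class_weights[where hB = "hB f" and hC = "hC f" and B = "real qB * real qC",
            OF gR h_nonneg h_sum[OF f]]) (use L[OF f] N[OF f] pointwise[OF f] in \<open>auto simp: N_def\<close>)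
    show "\<bar>measure_pmf.expectation Z (L f)\<bar> \<le> 1"
      using EZ_L[OF f] by simp
    show "\<bar>9 * pm + 16 * measure_pmf.expectation Z (N f)\<bar> \<le> \<bar>9 * pm\<bar> + 16 * (real qB * real qC)"
      using EZ_N[OF f] by linarith
  qed
  also have "\<dots> = 9 * pm + 16 * measure_pmf.expectation F (\<lambda>f. measure_pmf.expectation Z (N f))"
  proof -
    have "integrable (measure_pmf F) (\<lambda>f. measure_pmf.expectation Z (N f))"
      using EZ_N by (intro integrable_pmf_bounded[where B = "real qB * real qC"]) force
    then show ?thesis by simp
  qed
  also have "\<dots> \<le> 9 * pm + 16 * (real qB * real qC * sqrt (measure_pmf.expectation (pmf_of_set {..<qB}) (\<lambda>k.
         measure_pmf.expectation (pmf_of_set {..<qC}) (\<lambda>l.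
         measure_pmf.expectation F (\<lambda>f. measure_pmf.expectation Z (\<lambda>z. (n f z k l)\<^sup>2))))))"
    using expectation_double_sum_le_sqrt[OF assms(1,2) n] unfolding N_def by simp
  finally show ?thesis
    unfolding pm_def by (simp only: mult.assoc)
qed

section \<open>Averaging over the oracle and the reprogramming\<close>

lemma reprogrammed_run_expectation_bound:
  fixes F :: "(bs \<Rightarrow> bs) pmf" and Z :: "bs list pmf" and g :: "bs list \<Rightarrow> bs"
    and \<psi> :: "(bidx \<times> bidx) vect" and PiB PiC :: "bs \<Rightarrow> bidx oper"
  assumes SB: "SB = reg_space X m WB" and SC: "SC = reg_space X m WC"
    and fin: "finite X" "finite WB" "finite WC"
    and F: "\<And>f. f \<in> set_pmf F \<Longrightarrow> \<forall>x\<in>X. f x \<in> strings_of_len m"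
    and Z: "\<And>z. z \<in> set_pmf Z \<Longrightarrow> set z \<subseteq> strings_of_len m"
    and gR: "\<And>z. z \<in> set_pmf Z \<Longrightarrow> g z \<in> R"
    and UB: "is_unitary SB UB" and UC: "is_unitary SC UC"
    and \<psi>: "is_state (SB \<times> SC) \<psi>"
    and qB: "0 < qB" and qC: "0 < qC"
    and projB: "\<And>w. w \<in> R \<Longrightarrow> is_projector SB (PiB w)"
    and projC: "\<And>w. w \<in> R \<Longrightarrow> is_projector SC (PiC w)"
    and orthB: "\<And>w w'. w \<in> R \<Longrightarrow> w' \<in> R \<Longrightarrow> w \<noteq> w' \<Longrightarrow> op_mult SB (PiB w) (PiB w') = (\<lambda>_ _. 0)"
    and orthC: "\<And>w w'. w \<in> R \<Longrightarrow> w' \<in> R \<Longrightarrow> w \<noteq> w' \<Longrightarrow> op_mult SC (PiC w) (PiC w') = (\<lambda>_ _. 0)"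
  shows "measure_pmf.expectation F (\<lambda>f. measure_pmf.expectation Z (\<lambda>z.
        (vnorm (SB \<times> SC) (op_apply (SB \<times> SC) (tensor (PiB (g z)) (PiC (g z)))
          (op_apply (SB \<times> SC) (tensor (op_pow SB (query_op SB UB (reprogram f v z)) qB)
                              (op_pow SC (query_op SC UC (reprogram f v z)) qC)) \<psi>)))\<^sup>2))
    \<le> 9 * Sup ((\<lambda>w. measure_pmf.prob Z {z. g z = w}) ` R)
      + 16 * real qB * real qC *
        sqrt (measure_pmf.expectation (pmf_of_set {..<qB}) (\<lambda>k.
              measure_pmf.expectation (pmf_of_set {..<qC}) (\<lambda>l.
              measure_pmf.expectation F (\<lambda>f. measure_pmf.expectation Z (\<lambda>z.
                (vnorm (SB \<times> SC) (op_apply (SB \<times> SC) (tensor (query_proj SB v) (query_proj SC v))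
                  (op_apply (SB \<times> SC) (tensor (op_pow SB (query_op SB UB (reprogram f v z)) k)
                                      (op_pow SC (query_op SC UC (reprogram f v z)) l)) \<psi>)))\<^sup>2)))))"
proof -
  define S where "S = SB \<times> SC"
  define run where "run f k l = op_apply S (tensor (op_pow SB (query_op SB UB f) k) (op_pow SC (query_op SC UC f) l)) \<psi>"
    for f k l
  have finB: "finite SB" and finC: "finite SC"
    using SB SC fin by (simp_all add: finite_reg_space)
  have \<psi>_norm: "vnorm S \<psi> = 1" and \<psi>_sqnorm: "sqnorm S \<psi> = 1"
    using \<psi> vnorm_power2[of S \<psi>] unfolding is_state_def S_def by auto
  have query_contr: "contraction SB (op_apply SB (query_op SB UB f))"
    "contraction SC (op_apply SC (query_op SC UC f))" if "\<forall>x\<in>X. f x \<in> strings_of_len m" for f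
    using SB SC fin that UB UC by (auto intro: contraction_query_op)
  have reprogram_range: "\<forall>x\<in>X. reprogram f v z x \<in> strings_of_len m"
    if "f \<in> set_pmf F" "z \<in> set_pmf Z" for f z
    using F[OF that(1)] Z[OF that(2)] by (auto intro: reprogram_in_strings_of_len)
  have run_le_1: "vnorm S (run (reprogram f v z) k l) \<le> 1" if "f \<in> set_pmf F" "z \<in> set_pmf Z" for f z k l
  proof -
    have "contraction S (op_apply S (tensor (op_pow SB (query_op SB UB (reprogram f v z)) k)
        (op_pow SC (query_op SC UC (reprogram f v z)) l)))"
      unfolding S_def
      by (intro contraction_tensor contraction_op_pow finB finC query_contr reprogram_range that)
    from contractionD[OF this, of \<psi>] show ?thesis
      using \<psi>_norm unfolding run_def by simp
  qed
  show ?thesis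
    unfolding S_def[symmetric] run_def[symmetric]
  proof (rule expectation_two_party_bound[OF qB qC gR])
    show "0 \<le> sqnorm S (act_fst SB (PiB w) ((act_fst SB (query_op SB UB f) ^^ qB) \<psi>))"
      "0 \<le> sqnorm S (act_snd SC (PiC w) ((act_snd SC (query_op SC UC f) ^^ qC) \<psi>))" for f w
      by (simp_all add: sqnorm_nonneg)
    show "(\<Sum>w\<in>W. sqnorm S (act_fst SB (PiB w) ((act_fst SB (query_op SB UB f) ^^ qB) \<psi>))) \<le> 1"
      if "f \<in> set_pmf F" "finite W" "W \<subseteq> R" for f W
      unfolding \<psi>_sqnorm[symmetric] S_def using that
      by (intro sqnorm_sum_projected_act_fst_funpow_le projB orthB query_contr(1) F) auto
    show "(\<Sum>w\<in>W. sqnorm S (act_snd SC (PiC w) ((act_snd SC (query_op SC UC f) ^^ qC) \<psi>))) \<le> 1"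
      if "f \<in> set_pmf F" "finite W" "W \<subseteq> R" for f W
      unfolding \<psi>_sqnorm[symmetric] S_def using that
      by (intro sqnorm_sum_projected_act_snd_funpow_le projC orthC query_contr(2) F) auto
    show "0 \<le> (vnorm S (op_apply S (tensor (PiB (g z)) (PiC (g z))) (run (reprogram f v z) qB qC)))\<^sup>2
      \<and> (vnorm S (op_apply S (tensor (PiB (g z)) (PiC (g z))) (run (reprogram f v z) qB qC)))\<^sup>2 \<le> 1"
      if "f \<in> set_pmf F" "z \<in> set_pmf Z" for f z
    proof -
      have "contraction S (op_apply S (tensor (PiB (g z)) (PiC (g z))))"
        unfolding S_def by (intro contraction_tensor contraction_projector projB projC gR that)
      from contractionD[OF this]
      have "vnorm S (op_apply S (tensor (PiB (g z)) (PiC (g z))) (run (reprogram f v z) qB qC)) \<le> 1"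
        using run_le_1[OF that] by (meson order_trans)
      then show ?thesis by (simp add: vnorm_nonneg power_le_one)
    qed
    show "0 \<le> vnorm S (op_apply S (tensor (query_proj SB v) (query_proj SC v)) (run (reprogram f v z) k l))
      \<and> vnorm S (op_apply S (tensor (query_proj SB v) (query_proj SC v)) (run (reprogram f v z) k l)) \<le> 1"
      if "f \<in> set_pmf F" "z \<in> set_pmf Z" for f z k l
    proof -
      have "contraction S (op_apply S (tensor (query_proj SB v) (query_proj SC v)))"
        unfolding S_def by (intro contraction_tensor contraction_query_proj finB finC)
      from contractionD[OF this] show ?thesis
        using run_le_1[OF that] vnorm_nonneg by (meson order_trans)
    qed
    show "(vnorm S (op_apply S (tensor (PiB (g z)) (PiC (g z))) (run (reprogram f v z) qB qC)))\<^sup>2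
      \<le> 6 * sqnorm S (act_snd SC (PiC (g z)) ((act_snd SC (query_op SC UC f) ^^ qC) \<psi>))
        + 3 * sqnorm S (act_fst SB (PiB (g z)) ((act_fst SB (query_op SB UB f) ^^ qB) \<psi>))
        + 16 * (\<Sum>k<qB. \<Sum>l<qC.
          vnorm S (op_apply S (tensor (query_proj SB v) (query_proj SC v)) (run (reprogram f v z) k l)))"
      if "f \<in> set_pmf F" "z \<in> set_pmf Z" for f z
      unfolding run_def S_def
      by (rule reprogrammed_run_bound[OF SB SC fin F[OF that(1)] reprogram_range[OF that] reprogram_notin
            UB UC \<psi> projB[OF gR[OF that(2)]] projC[OF gR[OF that(2)]]])
  qed
qed

lemma eval_poly2_16: "eval_poly2 [:0, [:0, 16:]:] a b = 16 * a * b"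
  by (simp add: eval_poly2_def)

theorem mainTheorem8:
  shows "\<exists>P :: real poly poly.
   \<forall>(X :: bs set) (m :: nat) (WB :: nat set) (WC :: nat set) (R :: bs set) (r :: nat)
     (F :: (bs \<Rightarrow> bs) pmf) (Zs :: bs list set) (Z :: bs list pmf) (g :: bs list \<Rightarrow> bs)
     (v :: bs list) (UB :: bidx oper) (UC :: bidx oper) (\<psi> :: (bidx \<times> bidx) vect)
     (qB :: nat) (qC :: nat) (PiB :: bs \<Rightarrow> bidx oper) (PiC :: bs \<Rightarrow> bidx oper).
   (let SB = reg_space X m WB; SC = reg_space X m WC; S = SB \<times> SC in
    finite X \<and> finite WB \<and> finite WC \<and>
    (\<forall>f\<in>set_pmf F. \<forall>x\<in>X. f x \<in> strings_of_len m) \<and>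
    Zs \<subseteq> {z. length z = r \<and> set z \<subseteq> strings_of_len m} \<and> set_pmf Z \<subseteq> Zs \<and>
    inj_on g Zs \<and> g ` Zs \<subseteq> R \<and>
    length v = r \<and> set v \<subseteq> X \<and> distinct v \<and>
    is_unitary SB UB \<and> is_unitary SC UC \<and> is_state S \<psi> \<and>
    0 < qB \<and> 0 < qC \<and>
    (\<forall>w\<in>R. is_projector SB (PiB w) \<and> is_projector SC (PiC w)) \<and>
    (\<forall>w\<in>R. \<forall>w'\<in>R. w \<noteq> w' \<longrightarrow>
        op_mult SB (PiB w) (PiB w') = (\<lambda>_ _. 0) \<and> op_mult SC (PiC w) (PiC w') = (\<lambda>_ _. 0))
    \<longrightarrow>
    measure_pmf.expectation F (\<lambda>f. measure_pmf.expectation Z (\<lambda>z.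
        (vnorm S (op_apply S (tensor (PiB (g z)) (PiC (g z)))
          (op_apply S (tensor (op_pow SB (query_op SB UB (reprogram f v z)) qB)
                              (op_pow SC (query_op SC UC (reprogram f v z)) qC)) \<psi>)))\<^sup>2))
    \<le> 9 * Sup ((\<lambda>w. measure_pmf.prob Z {z. g z = w}) ` R)
      + eval_poly2 P (real qB) (real qC) *
        sqrt (measure_pmf.expectation (pmf_of_set {..<qB}) (\<lambda>k.
              measure_pmf.expectation (pmf_of_set {..<qC}) (\<lambda>l.
              measure_pmf.expectation F (\<lambda>f. measure_pmf.expectation Z (\<lambda>z.
                (vnorm S (op_apply S (tensor (query_proj SB v) (query_proj SC v))
                  (op_apply S (tensor (op_pow SB (query_op SB UB (reprogram f v z)) k)
                                      (op_pow SC (query_op SC UC (reprogram f v z)) l)) \<psi>)))\<^sup>2))))))"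
  by (intro exI[of _ "[:0, [:0, 16:]:]"] allI, unfold Let_def eval_poly2_16, intro impI, elim conjE,
      rule reprogrammed_run_expectation_bound[OF refl refl]) blast+

end
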